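(* Let $\Phi$ be a real, additive gain graph on $n$ vertices and let $d\leq n$. For generic $\mathbf{Q}\in(\mathbb{E}^d)^n$ (i.e. for all $\mathbf{Q}$ in an open dense subset), the arrangement $\mathcal{H}=\mathcal{H}(\Phi;\mathbf{Q})$ has characteristic polynomial $p_{\mathcal{H}}(\lambda)$ equal to the polynomial part of $\chi^b_\Phi(\lambda)/\lambda^{n-d}$, and Whitney-number polynomial $w_{\mathcal{H}}(x,\lambda)$ equal to the polynomial part (in $\lambda$) of $w^b_\Phi(x,\lambda)/\lambda^{n-d}$.
   Context: A real, additive gain graph $\Phi$ on $V=\{1,\dots,n\}$: finite graph with edge set $E$ (multiple edges allowed, every edge with two distinct endpoints) and gains $\phi(e;i,j)\in\mathbb{R}$ with $\phi(e;j,i)=-\phi(e;i,j)$. $S\subseteq E$ is balanced if every circle in $S$ has gain sum $0$; $c(S)$ counts components of $(V,S)$, isolated vertices included. With $\psi_{ij}(P)=d(P,Q_i)^2-d(P,Q_j)^2$, $\mathcal{H}(\Phi;\mathbf{Q})$ consists of hyperplanes $h(e)=\{P:\psi_{ij}(P)=\phi(e;i,j)\}$, one per edge $e$ with endpoints $i,j$. $\mathcal{L}(\mathcal{H})$ is the poset of nonempty intersections of subsets of $\mathcal{H}$ (including $\mathbb{E}^d$) under reverse inclusion, ranked by codimension. A balanced flat is a balanced $S\subseteq E$ such that every $e\notin S$ with both endpoints in one component of $(V,S)$ makes $S\cup\{e\}$ unbalanced; rank $n-c(S)$; $\mathrm{Lat}^b\Phi$ is the poset of balanced flats under inclusion. For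 a ranked poset $P$ with least element $\hat0$ and Möbius function $\mu$: $w_{ij}(P)=\sum\{\mu(x,y):\mathrm{rk}\,x=i,\mathrm{rk}\,y=j\}$, $w_j=w_{0j}$, and $w_j=w_{ij}=0$ when $j$ exceeds the maximum rank. For an arrangement $\mathcal{H}$ in $\mathbb{E}^d$: $p_{\mathcal{H}}(\lambda)=\sum_{j=0}^dw_j(\mathcal{L}(\mathcal{H}))\lambda^{d-j}$ and $w_{\mathcal{H}}(x,\lambda)=\sum_{0\leq i\leq j\leq d}w_{ij}(\mathcal{L}(\mathcal{H}))x^i\lambda^{d-j}$. For $\Phi$: $\chi^b_\Phi(\lambda)=\sum_{j=0}^nw_j(\mathrm{Lat}^b\Phi)\lambda^{n-j}$ and $w^b_\Phi(x,\lambda)=\sum_{0\leq i\leq j\leq n}w_{ij}(\mathrm{Lat}^b\Phi)x^i\lambda^{n-j}$. The polynomial part of a Laurent polynomial in $\lambda$ is the sum of its terms with nonnegative powers of $\lambda$. *)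

theory Defs
  imports "HOL-Analysis.Analysis" "HOL-Computational_Algebra.Polynomial"
begin

text \<open>A real additive gain graph: vertex set = the finite type 'v (n = CARD('v)),
  edge set E (finite), each edge e has an orientation ends e = (i,j) with i \<noteq> j,
  and gain g e = phi(e;i,j).\<close>

definition gphi :: "('e \<Rightarrow> 'v \<times> 'v) \<Rightarrow> ('e \<Rightarrow> real) \<Rightarrow> 'e \<Rightarrow> 'v \<Rightarrow> 'v \<Rightarrow> real" where
  "gphi ends g e a b = (if ends e = (a, b) then g e else - g e)"

definition joins :: "('e \<Rightarrow> 'v \<times> 'v) \<Rightarrow> 'e \<Rightarrow> 'v \<Rightarrow> 'v \<Rightarrow> bool" where
  "joins ends e a b \<longleftrightarrow> ends e = (a, b) \<or> ends e = (b, a)"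

definition is_circle :: "('e \<Rightarrow> 'v \<times> 'v) \<Rightarrow> 'e set \<Rightarrow> 'v list \<Rightarrow> 'e list \<Rightarrow> bool" where
  "is_circle ends S vs es \<longleftrightarrow> length es = length vs \<and> 2 \<le> length vs \<and> distinct vs \<and>
     distinct es \<and> set es \<subseteq> S \<and>
     (\<forall>t < length vs. joins ends (es ! t) (vs ! t) (vs ! ((t + 1) mod length vs)))"

definition circle_gain :: "('e \<Rightarrow> 'v \<times> 'v) \<Rightarrow> ('e \<Rightarrow> real) \<Rightarrow> 'v list \<Rightarrow> 'e list \<Rightarrow> real" where
  "circle_gain ends g vs es =
     (\<Sum>t < length vs. gphi ends g (es ! t) (vs ! t) (vs ! ((t + 1) mod length vs)))"

definition balanced :: "('e \<Rightarrow> 'v \<times> 'v) \<Rightarrow> ('e \<Rightarrow> real) \<Rightarrow> 'e set \<Rightarrow> bool" where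
  "balanced ends g S \<longleftrightarrow> (\<forall>vs es. is_circle ends S vs es \<longrightarrow> circle_gain ends g vs es = 0)"

definition adj :: "('e \<Rightarrow> 'v \<times> 'v) \<Rightarrow> 'e set \<Rightarrow> ('v \<times> 'v) set" where
  "adj ends S = {(a, b). \<exists>e\<in>S. joins ends e a b}"

text \<open>Number of connected components of (V,S), isolated vertices included.\<close>
definition ncomp :: "('e \<Rightarrow> 'v::finite \<times> 'v) \<Rightarrow> 'e set \<Rightarrow> nat" where
  "ncomp ends S = card (UNIV // ((adj ends S)\<^sup>*))"

definition balanced_flat :: "'e set \<Rightarrow> ('e \<Rightarrow> 'v \<times> 'v) \<Rightarrow> ('e \<Rightarrow> real) \<Rightarrow> 'e set \<Rightarrow> bool" where
  "balanced_flat E ends g S \<longleftrightarrow> S \<subseteq> E \<and> balanced ends g S \<and>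
     (\<forall>e \<in> E - S. ends e \<in> (adj ends S)\<^sup>* \<longrightarrow> \<not> balanced ends g (insert e S))"

definition latb :: "'e set \<Rightarrow> ('e \<Rightarrow> 'v \<times> 'v) \<Rightarrow> ('e \<Rightarrow> real) \<Rightarrow> 'e set set" where
  "latb E ends g = {S. balanced_flat E ends g S}"

definition latb_rank :: "('e \<Rightarrow> 'v::finite \<times> 'v) \<Rightarrow> 'e set \<Rightarrow> nat" where
  "latb_rank ends S = CARD('v) - ncomp ends S"

text \<open>Standard recursion mu(x,x)=1, mu(x,y) = - sum_{x \<le> z < y} mu(x,z) for x<y, 0 otherwise,
  computed with a fuel parameter; fuel card P suffices for a finite poset P.\<close>
fun mob_aux :: "'a set \<Rightarrow> ('a \<Rightarrow> 'a \<Rightarrow> bool) \<Rightarrow> nat \<Rightarrow> 'a \<Rightarrow> 'a \<Rightarrow> int" where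
  "mob_aux P le 0 x y = 0"
| "mob_aux P le (Suc k) x y =
     (if x = y then 1
      else if le x y then - (\<Sum>z \<in> {z \<in> P. le x z \<and> le z y \<and> z \<noteq> y}. mob_aux P le k x z)
      else 0)"

definition mobius :: "'a set \<Rightarrow> ('a \<Rightarrow> 'a \<Rightarrow> bool) \<Rightarrow> 'a \<Rightarrow> 'a \<Rightarrow> int" where
  "mobius P le x y = mob_aux P le (card P) x y"

definition whitney :: "'a set \<Rightarrow> ('a \<Rightarrow> 'a \<Rightarrow> bool) \<Rightarrow> ('a \<Rightarrow> nat) \<Rightarrow> nat \<Rightarrow> nat \<Rightarrow> int" where
  "whitney P le rk i j = (\<Sum>(x, y) \<in> {(x, y). x \<in> P \<and> y \<in> P \<and> rk x = i \<and> rk y = j}. mobius P le x y)"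

definition char_poly_of :: "'a set \<Rightarrow> ('a \<Rightarrow> 'a \<Rightarrow> bool) \<Rightarrow> ('a \<Rightarrow> nat) \<Rightarrow> nat \<Rightarrow> int poly" where
  "char_poly_of P le rk D = (\<Sum>j \<le> D. monom (whitney P le rk 0 j) (D - j))"

text \<open>sum_{0 \<le> i \<le> j \<le> D} w_ij x^i lambda^(D-j), as a polynomial in lambda (outer)
  whose coefficients are polynomials in x (inner).\<close>
definition whitney_poly_of :: "'a set \<Rightarrow> ('a \<Rightarrow> 'a \<Rightarrow> bool) \<Rightarrow> ('a \<Rightarrow> nat) \<Rightarrow> nat \<Rightarrow> int poly poly" where
  "whitney_poly_of P le rk D =
     (\<Sum>j \<le> D. \<Sum>i \<le> j. monom (monom (whitney P le rk i j) i) (D - j))"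

text \<open>Polynomial part (in lambda) of p(lambda) / lambda^k.\<close>
definition poly_part_div :: "nat \<Rightarrow> 'a::zero poly \<Rightarrow> 'a poly" where
  "poly_part_div k p = poly_shift k p"

definition gg_char_poly :: "'e set \<Rightarrow> ('e \<Rightarrow> 'v::finite \<times> 'v) \<Rightarrow> ('e \<Rightarrow> real) \<Rightarrow> int poly" where
  "gg_char_poly E ends g = char_poly_of (latb E ends g) (\<subseteq>) (latb_rank ends) CARD('v)"

definition gg_whitney_poly :: "'e set \<Rightarrow> ('e \<Rightarrow> 'v::finite \<times> 'v) \<Rightarrow> ('e \<Rightarrow> real) \<Rightarrow> int poly poly" where
  "gg_whitney_poly E ends g = whitney_poly_of (latb E ends g) (\<subseteq>) (latb_rank ends) CARD('v)"

definition hyp :: "('e \<Rightarrow> 'v::finite \<times> 'v) \<Rightarrow> ('e \<Rightarrow> real) \<Rightarrow> (real^'d)^'v \<Rightarrow> 'e \<Rightarrow> (real^'d) set" where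
  "hyp ends g Q e = {P. (dist P (Q $ fst (ends e)))\<^sup>2 - (dist P (Q $ snd (ends e)))\<^sup>2 = g e}"

text \<open>Intersection poset: nonempty intersections of subsets of H (empty intersection = E^d).\<close>
definition arr_lattice :: "'e set \<Rightarrow> ('e \<Rightarrow> 'v::finite \<times> 'v) \<Rightarrow> ('e \<Rightarrow> real) \<Rightarrow> (real^'d)^'v \<Rightarrow> (real^'d) set set" where
  "arr_lattice E ends g Q = {X. X \<noteq> {} \<and> (\<exists>T \<subseteq> E. X = \<Inter> (hyp ends g Q ` T))}"

definition revincl :: "'a set \<Rightarrow> 'a set \<Rightarrow> bool" where
  "revincl X Y \<longleftrightarrow> Y \<subseteq> X"

definition codim :: "(real^'d) set \<Rightarrow> nat" where
  "codim X = nat (int CARD('d) - aff_dim X)"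

definition arr_char_poly :: "'e set \<Rightarrow> ('e \<Rightarrow> 'v::finite \<times> 'v) \<Rightarrow> ('e \<Rightarrow> real) \<Rightarrow> (real^'d)^'v \<Rightarrow> int poly" where
  "arr_char_poly E ends g Q = char_poly_of (arr_lattice E ends g Q) revincl codim CARD('d)"

definition arr_whitney_poly :: "'e set \<Rightarrow> ('e \<Rightarrow> 'v::finite \<times> 'v) \<Rightarrow> ('e \<Rightarrow> real) \<Rightarrow> (real^'d)^'v \<Rightarrow> int poly poly" where
  "arr_whitney_poly E ends g Q = whitney_poly_of (arr_lattice E ends g Q) revincl codim CARD('d)"

end

theory Submission
  imports Defs
begin

text \<open>For a balanced edge set \<open>T\<close> with potential \<open>p\<close>, a point \<open>P\<close> lies on every hyperplane
  \<open>h(e)\<close>, \<open>e \<in> T\<close>, iff \<open>|P - Q\<^sub>i|\<^sup>2 - p i\<close> is constant on the components of \<open>(V, T)\<close>; against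
  fixed component representatives this is a system of \<open>rk T\<close> affine equations in \<open>P\<close>. Outside the
  zero set of finitely many nonzero polynomials in \<open>Q\<close> (certain minors of these systems) all the
  systems are as independent as possible: the intersection \<open>X\<^sub>T\<close> has codimension \<open>rk T\<close> if
  \<open>rk T \<le> d\<close> and is empty otherwise, and unbalanced sets have no common point, since a common
  point \<open>P\<close> yields the potential \<open>i \<mapsto> |P - Q\<^sub>i|\<^sup>2\<close>. Hence \<open>T \<mapsto> X\<^sub>T\<close> is a rank-preserving order
  isomorphism from the balanced flats of rank at most \<open>d\<close> onto \<open>\<L>(\<H>)\<close>, the Whitney numbers
  \<open>w\<^sub>i\<^sub>j\<close> agree for \<open>i, j \<le> d\<close>, and discarding the ranks above \<open>d\<close> is taking the polynomial part of
  the division by \<open>\<lambda>\<^sup>n\<^sup>-\<^sup>d\<close>.\<close>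

section \<open>Moebius functions and Whitney numbers\<close>

definition poset_on :: "'a set \<Rightarrow> ('a \<Rightarrow> 'a \<Rightarrow> bool) \<Rightarrow> bool" where
  "poset_on P le \<longleftrightarrow> (\<forall>x\<in>P. le x x) \<and> (\<forall>x\<in>P. \<forall>y\<in>P. le x y \<longrightarrow> le y x \<longrightarrow> x = y)
     \<and> (\<forall>x\<in>P. \<forall>y\<in>P. \<forall>z\<in>P. le x y \<longrightarrow> le y z \<longrightarrow> le x z)"

definition poset_interval :: "'a set \<Rightarrow> ('a \<Rightarrow> 'a \<Rightarrow> bool) \<Rightarrow> 'a \<Rightarrow> 'a \<Rightarrow> 'a set" where
  "poset_interval P le x z = {w\<in>P. le x w \<and> le w z}"

lemma poset_on_subset: "poset_on P (\<subseteq>)"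
  unfolding poset_on_def by auto

lemma poset_on_revincl: "poset_on P revincl"
  unfolding poset_on_def revincl_def by auto

lemma poset_onD:
  assumes "poset_on P le"
  shows poset_on_refl: "x \<in> P \<Longrightarrow> le x x"
    and poset_on_antisym: "x \<in> P \<Longrightarrow> y \<in> P \<Longrightarrow> le x y \<Longrightarrow> le y x \<Longrightarrow> x = y"
    and poset_on_trans: "x \<in> P \<Longrightarrow> y \<in> P \<Longrightarrow> z \<in> P \<Longrightarrow> le x y \<Longrightarrow> le y z \<Longrightarrow> le x z"
  using assms unfolding poset_on_def by blast+

lemma poset_interval_psubset:
  assumes P: "poset_on P le" "z \<in> P" "w \<in> P" "x \<in> P" and "le x w" "le w z" "w \<noteq> z"
  shows "poset_interval P le x w \<subset> poset_interval P le x z"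
proof (rule psubsetI)
  show "poset_interval P le x w \<subseteq> poset_interval P le x z"
    using assms(6) poset_on_trans[OF P(1) _ P(3,2)] unfolding poset_interval_def by auto
  have "z \<notin> poset_interval P le x w"
    using assms(6,7) poset_on_antisym[OF P(1,3,2)] unfolding poset_interval_def by auto
  moreover have "z \<in> poset_interval P le x z"
    using assms(5,6) P(2) poset_on_refl[OF P(1,2)] poset_on_trans[OF P(1) P(4) P(3,2)] unfolding poset_interval_def
    by auto
  ultimately show "poset_interval P le x w \<noteq> poset_interval P le x z"
    by blast
qed

lemma mob_aux_fuel_indep:
  assumes P: "finite P" "poset_on P le" "x \<in> P"
  shows "z \<in> P \<Longrightarrow> card (poset_interval P le x z) \<le> k \<Longrightarrow> card (poset_interval P le x z) \<le> k'
    \<Longrightarrow> mob_aux P le k x z = mob_aux P le k' x z"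
proof (induction k arbitrary: k' z)
  case 0
  have "finite (poset_interval P le x z)"
    using P(1) unfolding poset_interval_def by auto
  then have "\<not> le x z"
    using 0 P(3) poset_on_refl[OF P(2,3)] unfolding poset_interval_def by auto
  moreover have "x \<noteq> z"
    using calculation poset_on_refl[OF P(2,3)] by auto
  ultimately show ?case
    by (cases k') simp_all
next
  case (Suc k)
  show ?case
  proof (cases "le x z")
    case True
    have fin: "finite (poset_interval P le x z)"
      using P(1) unfolding poset_interval_def by auto
    have "x \<in> poset_interval P le x z"
      using True P(3) poset_on_refl[OF P(2,3)] unfolding poset_interval_def by auto
    then obtain m where m: "k' = Suc m"
      using Suc.prems(3) fin by (cases k') auto
    have "mob_aux P le k x w = mob_aux P le m x w"
      if w: "w \<in> {w\<in>P. le x w \<and> le w z \<and> w \<noteq> z}" for w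
    proof -
      have "card (poset_interval P le x w) < card (poset_interval P le x z)"
        using w psubset_card_mono[OF fin poset_interval_psubset[OF P(2) Suc.prems(1) _ P(3)]] by blast
      then show ?thesis
        using Suc.IH[of w m] Suc.prems m w by simp
    qed
    then show ?thesis
      unfolding m by (auto intro!: sum.cong)
  next
    case False
    then have "x \<noteq> z"
      using poset_on_refl[OF P(2,3)] by auto
    then show ?thesis
      using False by (cases k') simp_all
  qed
qed

lemma mob_aux_eq_mobius:
  assumes "finite P" "poset_on P le" "x \<in> P" "z \<in> P" "card P \<le> k"
  shows "mob_aux P le k x z = mobius P le x z"
proof -
  have "card (poset_interval P le x z) \<le> card P"
    using assms(1) unfolding poset_interval_def by (intro card_mono) auto
  then show ?thesis
    unfolding mobius_def using assms(5) by (intro mob_aux_fuel_indep[OF assms(1-4)]) auto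
qed

text \<open>The recursion defining \<open>mob_aux P le k x y\<close> only visits elements below \<open>y\<close>, so it is
  transported by an order isomorphism defined on a down-set.\<close>

lemma mob_aux_transfer:
  assumes down: "\<And>x y. y \<in> D \<Longrightarrow> x \<in> P1 \<Longrightarrow> le1 x y \<Longrightarrow> x \<in> D" and "D \<subseteq> P1"
    and bij: "bij_betw f D P2"
    and ord: "\<And>a b. a \<in> D \<Longrightarrow> b \<in> D \<Longrightarrow> le2 (f a) (f b) \<longleftrightarrow> le1 a b"
    and x: "x \<in> D"
  shows "y \<in> D \<Longrightarrow> mob_aux P1 le1 k x y = mob_aux P2 le2 k (f x) (f y)"
proof (induction k arbitrary: y)
  case (Suc k)
  let ?Z1 = "{z\<in>P1. le1 x z \<and> le1 z y \<and> z \<noteq> y}"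
  let ?Z2 = "{z\<in>P2. le2 (f x) z \<and> le2 z (f y) \<and> z \<noteq> f y}"
  have inj: "inj_on f D" and img: "f ` D = P2"
    using bij by (auto simp: bij_betw_def)
  have Z1: "?Z1 \<subseteq> D"
    using down Suc.prems by blast
  have "f ` ?Z1 = ?Z2"
  proof
    show "f ` ?Z1 \<subseteq> ?Z2"
      using Z1 ord x Suc.prems img inj_on_eq_iff[OF inj] by (auto 4 3)
    show "?Z2 \<subseteq> f ` ?Z1"
    proof
      fix z assume z: "z \<in> ?Z2"
      then obtain w where "w \<in> D" "z = f w"
        using img by auto
      then show "z \<in> f ` ?Z1"
        using z ord x Suc.prems \<open>D \<subseteq> P1\<close> by auto
    qed
  qed
  then have "(\<Sum>z\<in>?Z2. mob_aux P2 le2 k (f x) z) = (\<Sum>z\<in>?Z1. mob_aux P2 le2 k (f x) (f z))"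
    using sum.reindex[OF inj_on_subset[OF inj Z1]] by (metis (no_types, lifting) comp_apply sum.cong)
  also have "\<dots> = (\<Sum>z\<in>?Z1. mob_aux P1 le1 k x z)"
    using Suc.IH Z1 by (auto intro: sum.cong simp: subset_iff)
  finally show ?case
    using ord[OF x Suc.prems] inj_on_eq_iff[OF inj x Suc.prems] by simp
qed simp

lemma mobius_transfer:
  assumes "finite P1" "poset_on P1 le1" "finite P2" "poset_on P2 le2"
    and "\<And>x y. y \<in> D \<Longrightarrow> x \<in> P1 \<Longrightarrow> le1 x y \<Longrightarrow> x \<in> D" "D \<subseteq> P1"
    and "bij_betw f D P2"
    and "\<And>a b. a \<in> D \<Longrightarrow> b \<in> D \<Longrightarrow> le2 (f a) (f b) \<longleftrightarrow> le1 a b"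
    and "x \<in> D" "y \<in> D"
  shows "mobius P1 le1 x y = mobius P2 le2 (f x) (f y)"
proof -
  let ?k = "card P1 + card P2"
  have "f x \<in> P2" "f y \<in> P2"
    using assms(7,9,10) bij_betwE by blast+
  then have "mobius P2 le2 (f x) (f y) = mob_aux P2 le2 ?k (f x) (f y)"
    using mob_aux_eq_mobius[OF assms(3,4)] by simp
  also have "\<dots> = mob_aux P1 le1 ?k x y"
    by (rule mob_aux_transfer[of D P1 le1 f P2 le2 x y ?k, OF assms(5-10), symmetric])
  also have "\<dots> = mobius P1 le1 x y"
    using assms(6,9,10) by (intro mob_aux_eq_mobius[OF assms(1,2)]) auto
  finally show ?thesis ..
qed

lemma whitney_transfer:
  assumes P: "finite P1" "poset_on P1 le1" "finite P2" "poset_on P2 le2"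
    and mono: "\<And>x y. x \<in> P1 \<Longrightarrow> y \<in> P1 \<Longrightarrow> le1 x y \<Longrightarrow> rk1 x \<le> rk1 y"
    and bij: "bij_betw f {x\<in>P1. rk1 x \<le> d} P2"
    and ord: "\<And>a b. a \<in> P1 \<Longrightarrow> b \<in> P1 \<Longrightarrow> rk1 a \<le> d \<Longrightarrow> rk1 b \<le> d \<Longrightarrow> le2 (f a) (f b) \<longleftrightarrow> le1 a b"
    and rk: "\<And>a. a \<in> P1 \<Longrightarrow> rk1 a \<le> d \<Longrightarrow> rk2 (f a) = rk1 a"
    and "i \<le> d" "j \<le> d"
  shows "whitney P1 le1 rk1 i j = whitney P2 le2 rk2 i j"
proof -
  let ?D = "{x\<in>P1. rk1 x \<le> d}"
  let ?A1 = "{(x, y). x \<in> P1 \<and> y \<in> P1 \<and> rk1 x = i \<and> rk1 y = j}"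
  let ?A2 = "{(x, y). x \<in> P2 \<and> y \<in> P2 \<and> rk2 x = i \<and> rk2 y = j}"
  have mob: "mobius P1 le1 x y = mobius P2 le2 (f x) (f y)" if "x \<in> ?D" "y \<in> ?D" for x y
  proof (rule mobius_transfer[OF P _ _ bij _ that])
    show "x' \<in> ?D" if "y' \<in> ?D" "x' \<in> P1" "le1 x' y'" for x' y'
      using that mono[of x' y'] by auto
  qed (use ord in auto)
  have "whitney P1 le1 rk1 i j = (\<Sum>(x, y)\<in>?A1. mobius P2 le2 (f x) (f y))"
    unfolding whitney_def using assms(9,10) by (intro sum.cong) (auto simp: mob)
  also have "\<dots> = whitney P2 le2 rk2 i j"
    unfolding whitney_def
  proof (rule sum.reindex_bij_witness[of _ "map_prod (inv_into ?D f) (inv_into ?D f)" "map_prod f f"])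
    fix p assume p: "p \<in> ?A1"
    then obtain x y where xy: "p = (x, y)" "x \<in> ?D" "y \<in> ?D"
      using assms(9,10) by auto
    show "map_prod (inv_into ?D f) (inv_into ?D f) (map_prod f f p) = p"
      using xy bij_betw_inv_into_left[OF bij] by simp
    show "map_prod f f p \<in> ?A2"
      using p xy bij_betwE[OF bij] rk by auto
  next
    fix q assume q: "q \<in> ?A2"
    then obtain x y where xy: "q = (x, y)" "x \<in> P2" "y \<in> P2"
      by auto
    have inv: "inv_into ?D f z \<in> ?D" "f (inv_into ?D f z) = z" if "z \<in> P2" for z
      using that bij_betwE[OF bij_betw_inv_into[OF bij]] bij_betw_inv_into_right[OF bij] by blast+
    then have "rk1 (inv_into ?D f z) = rk2 z" if "z \<in> P2" for z
      using that rk[of "inv_into ?D f z"] by simp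
    then show "map_prod f f (map_prod (inv_into ?D f) (inv_into ?D f) q) = q"
      "map_prod (inv_into ?D f) (inv_into ?D f) q \<in> ?A1"
      using q xy inv by auto
  qed auto
  finally show ?thesis .
qed

section \<open>Truncating characteristic and Whitney polynomials\<close>

lemma poly_shift_homogeneous_sum:
  fixes c :: "nat \<Rightarrow> 'a::comm_monoid_add"
  assumes "d \<le> n"
  shows "poly_shift (n - d) (\<Sum>j\<le>n. monom (c j) (n - j)) = (\<Sum>j\<le>d. monom (c j) (d - j))"
proof (rule poly_eqI)
  fix m
  have "coeff (poly_shift (n - d) (\<Sum>j\<le>n. monom (c j) (n - j))) m
      = (\<Sum>j\<le>n. if n - j = m + (n - d) then c j else 0)"
    by (simp add: coeff_poly_shift coeff_sum)
  also have "\<dots> = (\<Sum>j\<le>n. if j = d - m then (if m \<le> d then c j else 0) else 0)"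
    using assms by (intro sum.cong) auto
  also have "\<dots> = (\<Sum>j\<le>d. if j = d - m then (if m \<le> d then c j else 0) else 0)"
    using assms by auto
  also have "\<dots> = coeff (\<Sum>j\<le>d. monom (c j) (d - j)) m"
    unfolding coeff_sum coeff_monom by (intro sum.cong) auto
  finally show "coeff (poly_shift (n - d) (\<Sum>j\<le>n. monom (c j) (n - j))) m
    = coeff (\<Sum>j\<le>d. monom (c j) (d - j)) m" .
qed

lemma char_poly_of_truncate:
  assumes "d \<le> n" and "\<And>j. j \<le> d \<Longrightarrow> whitney P2 le2 rk2 0 j = whitney P1 le1 rk1 0 j"
  shows "char_poly_of P2 le2 rk2 d = poly_shift (n - d) (char_poly_of P1 le1 rk1 n)"
  unfolding char_poly_of_def poly_shift_homogeneous_sum[OF assms(1)] using assms(2)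
  by (intro sum.cong) auto

lemma whitney_poly_of_truncate:
  assumes "d \<le> n" and "\<And>i j. i \<le> j \<Longrightarrow> j \<le> d \<Longrightarrow> whitney P2 le2 rk2 i j = whitney P1 le1 rk1 i j"
  shows "whitney_poly_of P2 le2 rk2 d = poly_shift (n - d) (whitney_poly_of P1 le1 rk1 n)"
  unfolding whitney_poly_of_def monom_sum[symmetric] poly_shift_homogeneous_sum[OF assms(1)]
  using assms(2) by (intro sum.cong) auto

section \<open>Potentials and balance\<close>

definition potential :: "('e \<Rightarrow> 'v \<times> 'v) \<Rightarrow> ('e \<Rightarrow> real) \<Rightarrow> 'e set \<Rightarrow> ('v \<Rightarrow> real) \<Rightarrow> bool" where
  "potential ends g S p \<longleftrightarrow> (\<forall>e\<in>S. g e = p (fst (ends e)) - p (snd (ends e)))"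

lemma potential_mono: "potential ends g S p \<Longrightarrow> T \<subseteq> S \<Longrightarrow> potential ends g T p"
  unfolding potential_def by blast

lemma gphi_potential:
  assumes "potential ends g S p" "e \<in> S" "joins ends e a b"
  shows "gphi ends g e a b = p a - p b"
  using assms unfolding potential_def gphi_def joins_def by auto

lemma sum_rotate:
  fixes f :: "nat \<Rightarrow> 'a::comm_monoid_add"
  assumes "0 < k"
  shows "(\<Sum>t<k. f ((t + 1) mod k)) = (\<Sum>t<k. f t)"
proof -
  obtain m where k: "k = Suc m"
    using assms by (cases k) auto
  have "(\<Sum>t<m. f ((t + 1) mod k)) = (\<Sum>t<m. f (Suc t))"
    unfolding k by (intro sum.cong) auto
  then have "(\<Sum>t<k. f ((t + 1) mod k)) = (\<Sum>t<m. f (Suc t)) + f 0"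
    unfolding k by simp
  also have "\<dots> = (\<Sum>t<k. f t)"
    unfolding k sum.lessThan_Suc_shift by (rule add.commute)
  finally show ?thesis .
qed

lemma potential_imp_balanced:
  assumes "potential ends g S p"
  shows "balanced ends g S"
  unfolding balanced_def
proof (intro allI impI)
  fix vs es assume c: "is_circle ends S vs es"
  let ?k = "length vs"
  have "es ! t \<in> S" "joins ends (es ! t) (vs ! t) (vs ! ((t + 1) mod ?k))" if "t < ?k" for t
    using c that nth_mem[of t es] unfolding is_circle_def by auto
  then have "circle_gain ends g vs es = (\<Sum>t<?k. p (vs ! t) - p (vs ! ((t + 1) mod ?k)))"
    unfolding circle_gain_def using gphi_potential[OF assms] by (intro sum.cong) auto
  also have "\<dots> = 0"
  proof -
    have "0 < ?k"
      using c unfolding is_circle_def by auto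
    then show ?thesis
      using sum_rotate[of ?k "\<lambda>t. p (vs ! t)"] by (simp add: sum_subtractf)
  qed
  finally show "circle_gain ends g vs es = 0" .
qed

lemma balanced_subset: "balanced ends g T \<Longrightarrow> S \<subseteq> T \<Longrightarrow> balanced ends g S"
  unfolding balanced_def is_circle_def by blast

lemma ends_in_adj:
  assumes "e \<in> S"
  shows "(fst (ends e), snd (ends e)) \<in> adj ends S" "(snd (ends e), fst (ends e)) \<in> adj ends S"
  using assms unfolding adj_def joins_def by auto

definition edge_path :: "('e \<Rightarrow> 'v \<times> 'v) \<Rightarrow> 'e set \<Rightarrow> 'v list \<Rightarrow> 'e list \<Rightarrow> bool" where
  "edge_path ends S vs es \<longleftrightarrow> length vs = Suc (length es) \<and> distinct vs \<and> set es \<subseteq> S \<and>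
     (\<forall>t < length es. joins ends (es ! t) (vs ! t) (vs ! Suc t))"

lemma edge_path_take:
  assumes "edge_path ends S vs es" "k < length vs"
  shows "edge_path ends S (take (Suc k) vs) (take k es)"
  using assms set_take_subset[of k es] unfolding edge_path_def by auto

lemma edge_path_snoc:
  assumes "edge_path ends S vs es" "z \<notin> set vs" "e \<in> S" "joins ends e (last vs) z"
  shows "edge_path ends S (vs @ [z]) (es @ [e])"
proof -
  have "vs \<noteq> []" "length vs = Suc (length es)"
    using assms(1) unfolding edge_path_def by auto
  then have "vs ! length es = last vs"
    by (simp add: last_conv_nth)
  then show ?thesis
    using assms unfolding edge_path_def by (auto simp: nth_append less_Suc_eq)
qed

lemma edge_path_exists:
  assumes "(a, b) \<in> (adj ends S)\<^sup>*"
  shows "\<exists>vs es. edge_path ends S vs es \<and> hd vs = a \<and> last vs = b"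
  using assms
proof (induction rule: rtrancl_induct)
  case base
  have "edge_path ends S [a] []"
    unfolding edge_path_def by simp
  then show ?case by force
next
  case (step y z)
  then obtain vs es where p: "edge_path ends S vs es" "hd vs = a" "last vs = y"
    by blast
  then have "vs \<noteq> []"
    unfolding edge_path_def by auto
  show ?case
  proof (cases "z \<in> set vs")
    case True
    then obtain k where k: "k < length vs" "vs ! k = z"
      by (metis in_set_conv_nth)
    then have "last (take (Suc k) vs) = z"
      by (simp add: take_Suc_conv_app_nth)
    then show ?thesis
      using edge_path_take[OF p(1) k(1)] p(2) \<open>vs \<noteq> []\<close> by (metis hd_take zero_less_Suc)
  next
    case False
    obtain e where "e \<in> S" "joins ends e y z"
      using step.hyps(2) unfolding adj_def by blast
    then show ?thesis
      using edge_path_snoc[OF p(1) False] p \<open>vs \<noteq> []\<close> by fastforce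
  qed
qed
lemma edge_path_distinct_edges:
  assumes "edge_path ends S vs es"
  shows "distinct es"
  unfolding distinct_conv_nth
proof (intro allI impI notI)
  fix i j assume ij: "i < length es" "j < length es" "i \<noteq> j" and eq: "es ! i = es ! j"
  have "joins ends (es ! i) (vs ! i) (vs ! Suc i)" "joins ends (es ! i) (vs ! j) (vs ! Suc j)"
    using assms ij eq unfolding edge_path_def by metis+
  then have "vs ! i = vs ! j \<or> vs ! i = vs ! Suc j \<and> vs ! Suc i = vs ! j"
    unfolding joins_def by auto
  then show False
    using assms ij unfolding edge_path_def by (auto simp: nth_eq_iff_index_eq)
qed

lemma edge_path_gain:
  assumes "edge_path ends S vs es" "potential ends g S p"
  shows "(\<Sum>t<length es. gphi ends g (es ! t) (vs ! t) (vs ! Suc t)) = p (hd vs) - p (last vs)"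
proof -
  have "es ! t \<in> S" "joins ends (es ! t) (vs ! t) (vs ! Suc t)" if "t < length es" for t
    using assms(1) that nth_mem[of t es] unfolding edge_path_def by auto
  then have "(\<Sum>t<length es. gphi ends g (es ! t) (vs ! t) (vs ! Suc t))
      = (\<Sum>t<length es. p (vs ! t) - p (vs ! Suc t))"
    using gphi_potential[OF assms(2)] by (intro sum.cong) auto
  also have "\<dots> = p (vs ! 0) - p (vs ! length es)"
    by (rule sum_lessThan_telescope')
  moreover have "vs \<noteq> []" "length vs = Suc (length es)"
    using assms(1) unfolding edge_path_def by auto
  ultimately show ?thesis
    by (simp add: hd_conv_nth last_conv_nth)
qed

lemma edge_path_close_circle:
  assumes path: "edge_path ends F vs es" "hd vs = a" "last vs = b"
    and e: "e \<notin> F" "ends e = (a, b)" "a \<noteq> b"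
  shows "is_circle ends (insert e F) vs (es @ [e])"
    and "circle_gain ends g vs (es @ [e]) = (\<Sum>t<length es. gphi ends g (es ! t) (vs ! t) (vs ! Suc t)) - g e"
proof -
  have len: "length vs = Suc (length es)"
    using path(1) unfolding edge_path_def by simp
  have "vs \<noteq> []"
    using len by auto
  then have ends_nth: "vs ! 0 = a" "vs ! length es = b"
    using path(2,3) len by (simp_all add: hd_conv_nth last_conv_nth)
  then have "es \<noteq> []"
    using e(3) by auto
  show "is_circle ends (insert e F) vs (es @ [e])"
    unfolding is_circle_def
  proof (intro conjI allI impI)
    show "2 \<le> length vs"
      using len \<open>es \<noteq> []\<close> by (cases es) auto
    show "distinct (es @ [e])"
      using edge_path_distinct_edges[OF path(1)] path(1) e(1) unfolding edge_path_def by auto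
    fix t assume t: "t < length vs"
    show "joins ends ((es @ [e]) ! t) (vs ! t) (vs ! ((t + 1) mod length vs))"
    proof (cases "t < length es")
      case True
      then show ?thesis
        using path(1) len unfolding edge_path_def by (simp add: nth_append)
    next
      case False
      then have "t = length es"
        using t len by simp
      then show ?thesis
        using len ends_nth e(2) unfolding joins_def by (simp add: nth_append)
    qed
  qed (use path(1) len in \<open>simp_all add: edge_path_def subset_insertI2\<close>)
  have "(\<Sum>t<length es. gphi ends g ((es @ [e]) ! t) (vs ! t) (vs ! ((t + 1) mod Suc (length es))))
      = (\<Sum>t<length es. gphi ends g (es ! t) (vs ! t) (vs ! Suc t))"
    by (intro sum.cong) (simp_all add: nth_append)
  moreover have "gphi ends g e b a = - g e"
    using e(2,3) unfolding gphi_def by simp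
  ultimately show "circle_gain ends g vs (es @ [e])
      = (\<Sum>t<length es. gphi ends g (es ! t) (vs ! t) (vs ! Suc t)) - g e"
    unfolding circle_gain_def len using ends_nth by simp
qed

text \<open>A path in \<open>F\<close> from \<open>a\<close> to \<open>b\<close> closed up by a new edge \<open>e\<close> from \<open>a\<close> to \<open>b\<close> is a circle,
  so balance of \<open>insert e F\<close> forces \<open>g e\<close> to be the potential difference.\<close>

lemma potential_insert_chord:
  assumes pot: "potential ends g F p" and bal: "balanced ends g (insert e F)"
    and e: "e \<notin> F" "ends e = (a, b)" "a \<noteq> b" and conn: "(a, b) \<in> (adj ends F)\<^sup>*"
  shows "potential ends g (insert e F) p"
proof -
  obtain vs es where path: "edge_path ends F vs es" "hd vs = a" "last vs = b"
    using edge_path_exists[OF conn] by blast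
  have "0 = circle_gain ends g vs (es @ [e])"
    using bal edge_path_close_circle(1)[OF path e] unfolding balanced_def by simp
  also have "\<dots> = p a - p b - g e"
    using edge_path_close_circle(2)[OF path e] edge_path_gain[OF path(1) pot] path(2,3) by simp
  finally have "g e = p a - p b"
    by simp
  then show ?thesis
    using pot e(2) unfolding potential_def by simp
qed

text \<open>If \<open>e\<close> joins two components of \<open>F\<close>, shift the potential on the component of its tail.\<close>

lemma potential_insert_bridge:
  assumes pot: "potential ends g F p" and e: "ends e = (a, b)" and disc: "(a, b) \<notin> (adj ends F)\<^sup>*"
  shows "\<exists>p'. potential ends g (insert e F) p'"
proof -
  let ?R = "(adj ends F)\<^sup>*"
  define p' where "p' x = (if (a, x) \<in> ?R then p x + (g e - p a + p b) else p x)" for x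
  have "potential ends g (insert e F) p'"
    unfolding potential_def
  proof
    fix e' assume "e' \<in> insert e F"
    show "g e' = p' (fst (ends e')) - p' (snd (ends e'))"
    proof (cases "e' = e")
      case True
      then show ?thesis
        using e disc unfolding p'_def by simp
    next
      case False
      then have "e' \<in> F"
        using \<open>e' \<in> insert e F\<close> by simp
      then have fwd: "(fst (ends e'), snd (ends e')) \<in> ?R" and bwd: "(snd (ends e'), fst (ends e')) \<in> ?R"
        by (metis ends_in_adj r_into_rtrancl)+
      have "(a, fst (ends e')) \<in> ?R \<longleftrightarrow> (a, snd (ends e')) \<in> ?R"
        using rtrancl_trans[OF _ fwd, of a] rtrancl_trans[OF _ bwd, of a] by blast
      then show ?thesis
        using pot \<open>e' \<in> F\<close> unfolding potential_def p'_def by auto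
    qed
  qed
  then show ?thesis
    by blast
qed

lemma balanced_imp_potential:
  assumes "finite S" "\<forall>e\<in>S. fst (ends e) \<noteq> snd (ends e)" "balanced ends g S"
  shows "\<exists>p. potential ends g S p"
  using assms
proof (induction S rule: finite_induct)
  case empty
  show ?case
    unfolding potential_def by simp
next
  case (insert e F)
  have "balanced ends g F"
    using balanced_subset insert.prems(2) by blast
  then obtain p where p: "potential ends g F p"
    using insert.IH insert.prems(1) by blast
  obtain a b where ab: "ends e = (a, b)"
    by fastforce
  show ?case
  proof (cases "(a, b) \<in> (adj ends F)\<^sup>*")
    case True
    then show ?thesis
      using potential_insert_chord[OF p insert.prems(2) insert.hyps(2) ab] ab insert.prems(1) by auto
  next
    case False
    then show ?thesis
      using potential_insert_bridge[OF p ab] by blast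
  qed
qed

lemma ends_in_adj_rtrancl: "e \<in> S \<Longrightarrow> ends e \<in> (adj ends S)\<^sup>*"
  using ends_in_adj(1)[of e S ends] by (metis prod.collapse r_into_rtrancl)

lemma sym_adj: "sym (adj ends S)"
  unfolding sym_def adj_def joins_def by auto

lemma equiv_adj_rtrancl: "equiv UNIV ((adj ends S)\<^sup>*)"
  unfolding equiv_def refl_on_def using sym_rtrancl[OF sym_adj] trans_rtrancl by auto

lemma adj_rtrancl_Image_eq_iff:
  "(adj ends S)\<^sup>* `` {a} = (adj ends S)\<^sup>* `` {b} \<longleftrightarrow> (a, b) \<in> (adj ends S)\<^sup>*"
  by (rule eq_equiv_class_iff[OF equiv_adj_rtrancl UNIV_I UNIV_I])

lemma adj_rtrancl_sym: "(a, b) \<in> (adj ends S)\<^sup>* \<Longrightarrow> (b, a) \<in> (adj ends S)\<^sup>*"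
  by (rule symD[OF sym_rtrancl[OF sym_adj]])

definition comp_rep :: "('e \<Rightarrow> 'v \<times> 'v) \<Rightarrow> 'e set \<Rightarrow> 'v \<Rightarrow> 'v" where
  "comp_rep ends S i = (SOME x. x \<in> (adj ends S)\<^sup>* `` {i})"

definition non_reps :: "('e \<Rightarrow> 'v \<times> 'v) \<Rightarrow> 'e set \<Rightarrow> 'v set" where
  "non_reps ends S = {i. comp_rep ends S i \<noteq> i}"

lemma comp_rep_connected: "(i, comp_rep ends S i) \<in> (adj ends S)\<^sup>*"
proof -
  have "i \<in> (adj ends S)\<^sup>* `` {i}"
    by simp
  then have "comp_rep ends S i \<in> (adj ends S)\<^sup>* `` {i}"
    unfolding comp_rep_def by (rule someI)
  then show ?thesis
    by simp
qed

lemma comp_rep_eq: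
  assumes "(a, b) \<in> (adj ends S)\<^sup>*"
  shows "comp_rep ends S a = comp_rep ends S b"
proof -
  have "(adj ends S)\<^sup>* `` {a} = (adj ends S)\<^sup>* `` {b}"
    using assms adj_rtrancl_Image_eq_iff by metis
  then show ?thesis
    unfolding comp_rep_def by simp
qed

lemma comp_rep_idem: "comp_rep ends S (comp_rep ends S i) = comp_rep ends S i"
  using comp_rep_eq[OF comp_rep_connected] by metis

lemma comp_rep_not_in_non_reps: "comp_rep ends S i \<notin> non_reps ends S"
  unfolding non_reps_def using comp_rep_idem by simp

lemma connected_eq_if_edgewise_eq:
  assumes "\<forall>e\<in>S. f (fst (ends e)) = f (snd (ends e))" "(a, b) \<in> (adj ends S)\<^sup>*"
  shows "f a = f b"
  using assms(2)
proof (induction rule: rtrancl_induct)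
  case (step y z)
  then obtain e where "e \<in> S" "joins ends e y z"
    unfolding adj_def by blast
  then have "f y = f z"
    using assms(1) unfolding joins_def by (metis fst_conv snd_conv)
  then show ?case
    using step.IH by simp
qed simp

lemma edgewise_eq_iff_comp_rep:
  "(\<forall>e\<in>S. f (fst (ends e)) = f (snd (ends e))) \<longleftrightarrow> (\<forall>i. f i = f (comp_rep ends S i))"
proof
  assume "\<forall>e\<in>S. f (fst (ends e)) = f (snd (ends e))"
  from connected_eq_if_edgewise_eq[OF this comp_rep_connected]
  show "\<forall>i. f i = f (comp_rep ends S i)"
    by blast
next
  assume rep: "\<forall>i. f i = f (comp_rep ends S i)"
  show "\<forall>e\<in>S. f (fst (ends e)) = f (snd (ends e))"
  proof
    fix e assume "e \<in> S"
    then have "comp_rep ends S (fst (ends e)) = comp_rep ends S (snd (ends e))"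
      by (intro comp_rep_eq r_into_rtrancl ends_in_adj)
    then show "f (fst (ends e)) = f (snd (ends e))"
      using rep by metis
  qed
qed

lemma potential_diff_connected:
  assumes "potential ends g S p" "potential ends g S q" "(a, b) \<in> (adj ends S)\<^sup>*"
  shows "p a - p b = q a - q b"
proof -
  have "\<forall>e\<in>S. p (fst (ends e)) - q (fst (ends e)) = p (snd (ends e)) - q (snd (ends e))"
    using assms(1,2) unfolding potential_def by auto
  from connected_eq_if_edgewise_eq[OF this assms(3)] show ?thesis
    by simp
qed

lemma quotient_adj_rtrancl: "UNIV // (adj ends S)\<^sup>* = (\<lambda>x. (adj ends S)\<^sup>* `` {x}) ` UNIV"
  unfolding quotient_def by auto

lemma ncomp_le_card: "ncomp (ends :: 'e \<Rightarrow> 'v::finite \<times> 'v) S \<le> CARD('v)"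
  unfolding ncomp_def quotient_adj_rtrancl by (rule card_image_le) simp

lemma card_non_reps:
  fixes ends :: "'e \<Rightarrow> 'v::finite \<times> 'v"
  shows "card (non_reps ends S) = latb_rank ends S"
proof -
  let ?R = "(adj ends S)\<^sup>*"
  have "bij_betw (\<lambda>i. ?R `` {i}) (- non_reps ends S) (UNIV // ?R)"
    unfolding bij_betw_def
  proof
    show "inj_on (\<lambda>i. ?R `` {i}) (- non_reps ends S)"
    proof (rule inj_onI)
      fix i j assume ij: "i \<in> - non_reps ends S" "j \<in> - non_reps ends S" "?R `` {i} = ?R `` {j}"
      then have "comp_rep ends S i = comp_rep ends S j"
        unfolding comp_rep_def by simp
      then show "i = j"
        using ij unfolding non_reps_def by simp
    qed
    show "(\<lambda>i. ?R `` {i}) ` (- non_reps ends S) = UNIV // ?R"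
    proof
      show "(\<lambda>i. ?R `` {i}) ` (- non_reps ends S) \<subseteq> UNIV // ?R"
        unfolding quotient_adj_rtrancl by auto
      show "UNIV // ?R \<subseteq> (\<lambda>i. ?R `` {i}) ` (- non_reps ends S)"
      proof
        fix C assume "C \<in> UNIV // ?R"
        then obtain x where x: "C = ?R `` {x}"
          unfolding quotient_adj_rtrancl by auto
        have "?R `` {x} = ?R `` {comp_rep ends S x}"
          using adj_rtrancl_Image_eq_iff comp_rep_connected by metis
        moreover have "comp_rep ends S x \<in> - non_reps ends S"
          using comp_rep_not_in_non_reps by simp
        ultimately show "C \<in> (\<lambda>i. ?R `` {i}) ` (- non_reps ends S)"
          unfolding x by blast
      qed
    qed
  qed
  then have "card (- non_reps ends S) = ncomp ends S"
    unfolding ncomp_def by (rule bij_betw_same_card)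
  moreover have "card (- non_reps ends S) = CARD('v) - card (non_reps ends S)"
    by (simp add: Compl_eq_Diff_UNIV card_Diff_subset)
  moreover have "card (non_reps ends S) \<le> CARD('v)"
    by (simp add: card_mono)
  ultimately show ?thesis
    unfolding latb_rank_def by linarith
qed

lemma adj_rtrancl_mono: "S \<subseteq> T \<Longrightarrow> (adj ends S)\<^sup>* \<subseteq> (adj ends T)\<^sup>*"
  unfolding adj_def by (intro rtrancl_mono) auto

text \<open>Components of \<open>T \<supseteq> S\<close> are unions of components of \<open>S\<close>; equal counts force equal partitions.\<close>

lemma ncomp_antimono:
  fixes ends :: "'e \<Rightarrow> 'v::finite \<times> 'v"
  assumes "S \<subseteq> T"
  shows "ncomp ends T \<le> ncomp ends S"
    and "ncomp ends T = ncomp ends S \<Longrightarrow> (adj ends T)\<^sup>* = (adj ends S)\<^sup>*"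
proof -
  let ?R1 = "(adj ends S)\<^sup>*" and ?R2 = "(adj ends T)\<^sup>*"
  let ?f = "\<lambda>C. ?R2 `` C"
  have sub: "?R1 \<subseteq> ?R2"
    using adj_rtrancl_mono[OF assms] .
  have fx: "?f (?R1 `` {x}) = ?R2 `` {x}" for x
  proof
    show "?f (?R1 `` {x}) \<subseteq> ?R2 `` {x}"
      using sub by (auto intro: rtrancl_trans)
  qed auto
  have img: "?f ` (UNIV // ?R1) = UNIV // ?R2"
    unfolding quotient_adj_rtrancl image_image fx ..
  have fin: "finite (UNIV // ?R1)"
    unfolding quotient_adj_rtrancl by simp
  show "ncomp ends T \<le> ncomp ends S"
    unfolding ncomp_def using card_image_le[OF fin, of ?f] img by simp
  assume "ncomp ends T = ncomp ends S"
  then have inj: "inj_on ?f (UNIV // ?R1)"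
    using inj_on_iff_eq_card[OF fin, of ?f] img unfolding ncomp_def by simp
  show "?R2 = ?R1"
  proof
    show "?R2 \<subseteq> ?R1"
    proof
      fix ab assume ab: "ab \<in> ?R2"
      obtain a b where abe: "ab = (a, b)"
        by (cases ab)
      have "?f (?R1 `` {a}) = ?f (?R1 `` {b})"
        using adj_rtrancl_Image_eq_iff ab abe fx by metis
      moreover have "?R1 `` {a} \<in> UNIV // ?R1" "?R1 `` {b} \<in> UNIV // ?R1"
        by (auto intro: quotientI)
      ultimately have "?R1 `` {a} = ?R1 `` {b}"
        using inj_onD[OF inj] by metis
      then show "ab \<in> ?R1"
        using adj_rtrancl_Image_eq_iff abe by metis
    qed
  qed (rule sub)
qed

section \<open>Polynomial functions\<close>

lemma real_polynomial_function_on_line: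
  fixes f :: "'a::real_normed_vector \<Rightarrow> real"
  assumes "real_polynomial_function f"
  shows "\<exists>p. \<forall>t. f (x + t *\<^sub>R v) = poly p t"
  using assms
proof (induction rule: real_polynomial_function.induct)
  case (linear f)
  then have "linear f"
    by (rule bounded_linear.linear)
  then have "f (x + t *\<^sub>R v) = poly [:f x, f v:] t" for t
    by (simp add: linear_add linear_scale algebra_simps)
  then show ?case
    by blast
next
  case (const c)
  show ?case
    by (rule exI[of _ "[:c:]"]) simp
next
  case (add f g)
  then obtain p q where "\<forall>t. f (x + t *\<^sub>R v) = poly p t" "\<forall>t. g (x + t *\<^sub>R v) = poly q t"
    by blast
  then show ?case
    by (intro exI[of _ "p + q"]) simp
next
  case (mult f g)
  then obtain p q where "\<forall>t. f (x + t *\<^sub>R v) = poly p t" "\<forall>t. g (x + t *\<^sub>R v) = poly q t"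
    by blast
  then show ?case
    by (intro exI[of _ "p * q"]) simp
qed

lemma closure_Compl_finite_real:
  assumes "finite (S :: real set)"
  shows "closure (- S) = UNIV"
proof -
  have "x islimpt (- S)" for x
    using islimpt_Un_finite[OF assms, of x "- S"] by (simp add: Compl_partition)
  then show ?thesis
    unfolding closure_def by auto
qed

text \<open>Density: on the line through any point and a point where \<open>f\<close> does not vanish,
  \<open>f\<close> restricts to a nonzero univariate polynomial, which has only finitely many roots.\<close>

lemma real_polynomial_function_nonzero_open_dense:
  fixes f :: "'a::real_normed_vector \<Rightarrow> real"
  assumes f: "real_polynomial_function f" and "f a \<noteq> 0"
  shows "open {x. f x \<noteq> 0} \<and> closure {x. f x \<noteq> 0} = UNIV"
proof
  have "continuous_on UNIV f"
    using f by (simp add: differentiable_imp_continuous_on differentiable_on_real_polynomial_function)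
  then show "open {x. f x \<noteq> 0}"
    using open_Collect_neq[of f "\<lambda>_. 0"] by simp
  have "x \<in> closure {x. f x \<noteq> 0}" for x
  proof -
    let ?l = "\<lambda>t. x + t *\<^sub>R (a - x)"
    obtain p where p: "\<And>t. f (?l t) = poly p t"
      using real_polynomial_function_on_line[OF f] by blast
    then have "p \<noteq> 0"
      using p[of 1] \<open>f a \<noteq> 0\<close> by auto
    then have dense: "closure (- {t. poly p t = 0}) = UNIV"
      by (intro closure_Compl_finite_real poly_roots_finite)
    have "?l ` (- {t. poly p t = 0}) \<subseteq> {x. f x \<noteq> 0}"
      using p by auto
    then have "?l ` (- {t. poly p t = 0}) \<subseteq> closure {x. f x \<noteq> 0}"
      using closure_subset by (rule order_trans)
    moreover have "continuous_on (closure (- {t. poly p t = 0})) ?l"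
      by (intro continuous_intros)
    ultimately have "?l ` UNIV \<subseteq> closure {x. f x \<noteq> 0}"
      using image_closure_subset[OF _ closed_closure] dense by metis
    then show ?thesis
      using rangeI[of ?l 0] by auto
  qed
  then show "closure {x. f x \<noteq> 0} = UNIV"
    by blast
qed

lemma open_dense_Inter:
  fixes F :: "'a::topological_space set set"
  assumes "finite F" "\<And>S. S \<in> F \<Longrightarrow> open S \<and> closure S = UNIV"
  shows "open (\<Inter>F) \<and> closure (\<Inter>F) = UNIV"
  using assms
proof (induction F rule: finite_induct)
  case (insert S F)
  have S: "open S" "closure S = UNIV"
    using insert.prems by auto
  have F: "open (\<Inter>F)" "closure (\<Inter>F) = UNIV"
    using insert.IH insert.prems by auto
  have "S \<inter> closure (\<Inter>F) \<subseteq> closure (S \<inter> \<Inter>F)"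
    by (rule open_Int_closure_subset[OF S(1)])
  then have "closure S \<subseteq> closure (S \<inter> \<Inter>F)"
    using F(2) by (simp add: closure_minimal)
  then have "closure (S \<inter> \<Inter>F) = UNIV"
    using S(2) by auto
  then show ?case
    using S(1) F(1) by (simp add: open_Int)
qed simp

lemma real_polynomial_function_det:
  fixes M :: "'a::real_normed_vector \<Rightarrow> real^'n^'n"
  assumes "\<And>i j. real_polynomial_function (\<lambda>x. M x $ i $ j)"
  shows "real_polynomial_function (\<lambda>x. det (M x))"
  unfolding det_def
proof (rule real_polynomial_function_sum)
  fix p :: "'n \<Rightarrow> 'n"
  have "real_polynomial_function (\<lambda>x. \<Prod>i\<in>UNIV. M x $ i $ p i)"
    by (rule real_polynomial_function_prod) (simp_all add: assms)
  then have "polynomial_function (\<lambda>x. of_int (sign p) *\<^sub>R (\<Prod>i\<in>UNIV. M x $ i $ p i))"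
    unfolding real_polynomial_function_eq by (rule polynomial_function_cmul)
  then show "real_polynomial_function (\<lambda>x. of_int (sign p) * (\<Prod>i\<in>UNIV. M x $ i $ p i))"
    by (simp add: real_polynomial_function_eq)
qed simp

section \<open>Systems of affine equations\<close>

lemma coordinate_flat_aff_dim:
  "{y::real^'n. \<forall>k\<in>K. y $ k = c k} \<noteq> {} \<and> aff_dim {y::real^'n. \<forall>k\<in>K. y $ k = c k} = int (CARD('n) - card K)"
proof -
  define b :: "real^'n" where "b = (\<chi> k. c k)"
  define Y0 where "Y0 = {y::real^'n. \<forall>k\<in>K. y $ k = 0}"
  have Y: "{y::real^'n. \<forall>k\<in>K. y $ k = c k} = (+) b ` Y0"
  proof
    show "{y. \<forall>k\<in>K. y $ k = c k} \<subseteq> (+) b ` Y0"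
    proof
      fix y :: "real^'n" assume "y \<in> {y. \<forall>k\<in>K. y $ k = c k}"
      then have "y - b \<in> Y0"
        unfolding Y0_def b_def by simp
      then show "y \<in> (+) b ` Y0"
        by (metis add.commute diff_add_cancel imageI)
    qed
  qed (auto simp: Y0_def b_def)
  have Y0_eq: "Y0 = {x::real^'n. \<forall>i. i \<notin> (UNIV - K) \<longrightarrow> x $ i = 0}"
    unfolding Y0_def by auto
  have "aff_dim Y0 = int (dim Y0)"
    by (rule aff_dim_subspace) (simp add: subspace_def Y0_def)
  also have "dim Y0 = card (UNIV - K)"
    unfolding Y0_eq dim_vec_eq[symmetric] by (simp only: dim_substandard_cart)
  also have "card (UNIV - K) = CARD('n) - card K"
    by (simp add: card_Diff_subset)
  finally have "aff_dim Y0 = int (CARD('n) - card K)" .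
  moreover have "0 \<in> Y0"
    unfolding Y0_def by simp
  ultimately show ?thesis
    unfolding Y by (auto simp: aff_dim_translation_eq)
qed

lemma invertible_preimage_aff_dim:
  fixes M :: "real^'n^'n"
  assumes "invertible M"
  shows "{x. M *v x \<in> Y} \<noteq> {} \<longleftrightarrow> Y \<noteq> {}" and "aff_dim {x. M *v x \<in> Y} = aff_dim Y"
proof -
  obtain M' where M': "M ** M' = mat 1" "M' ** M = mat 1"
    using assms unfolding invertible_def by blast
  have img: "(*v) M ` {x. M *v x \<in> Y} = Y"
  proof
    show "Y \<subseteq> (*v) M ` {x. M *v x \<in> Y}"
    proof
      fix y assume "y \<in> Y"
      moreover have "M *v (M' *v y) = y"
        by (simp add: matrix_vector_mul_assoc M')
      ultimately show "y \<in> (*v) M ` {x. M *v x \<in> Y}"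
        by (intro image_eqI[of _ _ "M' *v y"]) simp_all
    qed
  qed auto
  then show "{x. M *v x \<in> Y} \<noteq> {} \<longleftrightarrow> Y \<noteq> {}"
    by auto
  have "inj ((*v) M)"
    by (rule inj_matrix_vector_mult[OF assms])
  then have "aff_dim ((*v) M ` {x. M *v x \<in> Y}) = aff_dim {x. M *v x \<in> Y}"
    by (rule aff_dim_injective_linear_image[OF matrix_vector_mul_linear])
  then show "aff_dim {x. M *v x \<in> Y} = aff_dim Y"
    unfolding img by simp
qed

lemma linear_system_aff_dim:
  fixes u :: "'i \<Rightarrow> real^'d" and \<beta> :: "'i \<Rightarrow> real" and \<sigma> :: "'i \<Rightarrow> 'd"
  assumes inj: "inj_on \<sigma> N"
    and det: "det (\<chi> k j. if k \<in> \<sigma> ` N then u (inv_into N \<sigma> k) $ j else (if k = j then 1 else 0)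
               :: real^'d^'d) \<noteq> 0"
  shows "{P. \<forall>i\<in>N. P \<bullet> u i = \<beta> i} \<noteq> {} \<and> aff_dim {P. \<forall>i\<in>N. P \<bullet> u i = \<beta> i} = int (CARD('d) - card N)"
proof -
  define M :: "real^'d^'d" where
    "M = (\<chi> k j. if k \<in> \<sigma> ` N then u (inv_into N \<sigma> k) $ j else (if k = j then 1 else 0))"
  have row: "(M *v P) $ \<sigma> i = P \<bullet> u i" if "i \<in> N" for i P
    using that inv_into_f_f[OF inj that] unfolding M_def matrix_mult_dot by (simp add: inner_commute)
  let ?Y = "{y. \<forall>k\<in>\<sigma> ` N. y $ k = \<beta> (inv_into N \<sigma> k)}"
  have S: "{P. \<forall>i\<in>N. P \<bullet> u i = \<beta> i} = {P. M *v P \<in> ?Y}"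
    using row inv_into_f_f[OF inj] by auto
  have "invertible M"
    using det unfolding M_def invertible_det_nz .
  moreover have "card (\<sigma> ` N) = card N"
    by (rule card_image[OF inj])
  ultimately show ?thesis
    unfolding S using invertible_preimage_aff_dim[of M ?Y] coordinate_flat_aff_dim[of "\<sigma> ` N"] by simp
qed

lemma det_nonzero_iff_trivial_kernel:
  fixes M :: "real^'n^'n"
  shows "det M \<noteq> 0 \<longleftrightarrow> (\<forall>y. M *v y = 0 \<longrightarrow> y = 0)"
proof -
  have "det M \<noteq> 0 \<longleftrightarrow> inj ((*v) M)"
    using det_nz_iff_inj[OF matrix_vector_mul_linear[of M]] by simp
  also have "\<dots> \<longleftrightarrow> (\<forall>y. M *v y = 0 \<longrightarrow> y = 0)"
    by (rule linear_injective_0[OF matrix_vector_mul_linear])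
  finally show ?thesis .
qed

lemma matrix_vector_mult_option_component:
  fixes M :: "real^'n::finite option^'m"
  shows "(M *v y) $ k = M $ k $ None * y $ None + (\<Sum>j\<in>UNIV. M $ k $ Some j * y $ Some j)"
  unfolding matrix_vector_mult_def by (simp add: UNIV_option_conv sum.reindex)

text \<open>A solution \<open>P\<close> would give the kernel vector \<open>(P, -1)\<close> of the augmented matrix.\<close>

lemma linear_system_empty:
  fixes u :: "'i \<Rightarrow> real^'d" and \<beta> :: "'i \<Rightarrow> real" and \<tau> :: "'d option \<Rightarrow> 'i"
  assumes rng: "range \<tau> \<subseteq> N"
    and det: "det (\<chi> k l. case l of Some j \<Rightarrow> u (\<tau> k) $ j | None \<Rightarrow> \<beta> (\<tau> k)
               :: real^'d option^'d option) \<noteq> 0"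
  shows "{P. \<forall>i\<in>N. P \<bullet> u i = \<beta> i} = {}"
proof (rule ccontr)
  define M :: "real^'d option^'d option" where
    "M = (\<chi> k l. case l of Some j \<Rightarrow> u (\<tau> k) $ j | None \<Rightarrow> \<beta> (\<tau> k))"
  assume "{P. \<forall>i\<in>N. P \<bullet> u i = \<beta> i} \<noteq> {}"
  then obtain P where P: "\<forall>i\<in>N. P \<bullet> u i = \<beta> i"
    by blast
  define y :: "real^'d option" where "y = (\<chi> l. case l of Some j \<Rightarrow> P $ j | None \<Rightarrow> -1)"
  have "M *v y = 0"
  proof (rule vec_eq_iff[THEN iffD2], rule allI)
    fix k
    have "(M *v y) $ k = P \<bullet> u (\<tau> k) - \<beta> (\<tau> k)"
      unfolding matrix_vector_mult_option_component M_def y_def inner_vec_def by (simp add: mult.commute)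
    also have "\<dots> = 0"
      using P rng by auto
    finally show "(M *v y) $ k = 0 $ k"
      by simp
  qed
  then have "y = 0"
    using det unfolding M_def det_nonzero_iff_trivial_kernel by blast
  moreover have "y $ None = -1"
    unfolding y_def by simp
  ultimately show False
    by simp
qed

section \<open>The intersections of the arrangement\<close>

definition hyp_inter :: "('e \<Rightarrow> 'v::finite \<times> 'v) \<Rightarrow> ('e \<Rightarrow> real) \<Rightarrow> (real^'d)^'v \<Rightarrow> 'e set \<Rightarrow> (real^'d) set"
  where "hyp_inter ends g Q T = \<Inter> (hyp ends g Q ` T)"

lemma mem_hyp_inter_iff_potential:
  "P \<in> hyp_inter ends g Q T \<longleftrightarrow> potential ends g T (\<lambda>i. (dist P (Q $ i))\<^sup>2)"
  unfolding hyp_inter_def potential_def hyp_def by auto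

lemma hyp_inter_antimono: "S \<subseteq> T \<Longrightarrow> hyp_inter ends g Q T \<subseteq> hyp_inter ends g Q S"
  unfolding hyp_inter_def by auto

lemma hyp_inter_Un: "hyp_inter ends g Q (S \<union> T) = hyp_inter ends g Q S \<inter> hyp_inter ends g Q T"
  unfolding hyp_inter_def by auto

text \<open>Relative to a potential \<open>p\<close> of \<open>T\<close>, the point \<open>P\<close> lies in all hyperplanes of \<open>T\<close> iff
  \<open>|P - Q\<^sub>i|\<^sup>2 - p i\<close> takes the same value at every vertex \<open>i\<close> and at the representative of its
  component; each such condition is an affine equation in \<open>P\<close>.\<close>

definition eq_normal :: "('e \<Rightarrow> 'v \<times> 'v) \<Rightarrow> 'e set \<Rightarrow> (real^'d)^'v \<Rightarrow> 'v \<Rightarrow> real^'d" where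
  "eq_normal ends T Q i = Q $ comp_rep ends T i - Q $ i"

definition eq_offset :: "('e \<Rightarrow> 'v \<times> 'v) \<Rightarrow> 'e set \<Rightarrow> ('v \<Rightarrow> real) \<Rightarrow> (real^'d)^'v \<Rightarrow> 'v \<Rightarrow> real" where
  "eq_offset ends T p Q i = (Q $ comp_rep ends T i \<bullet> Q $ comp_rep ends T i - Q $ i \<bullet> Q $ i
     + p i - p (comp_rep ends T i)) / 2"

lemma dist_sq_diff_eq_iff:
  fixes P a b :: "'a::real_inner"
  shows "(dist P a)\<^sup>2 - c = (dist P b)\<^sup>2 - c' \<longleftrightarrow> P \<bullet> (b - a) = (b \<bullet> b - a \<bullet> a + c - c') / 2"
proof -
  have d: "(dist P x)\<^sup>2 = P \<bullet> P - 2 * (P \<bullet> x) + x \<bullet> x" for x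
    by (simp add: dist_norm power2_norm_eq_inner inner_diff_left inner_diff_right inner_commute)
  show ?thesis
    unfolding d inner_diff_right by auto
qed

lemma hyp_inter_eq_linear_system:
  assumes "potential ends g T p"
  shows "hyp_inter ends g Q T = {P. \<forall>i\<in>non_reps ends T. P \<bullet> eq_normal ends T Q i = eq_offset ends T p Q i}"
proof -
  have "P \<in> hyp_inter ends g Q T \<longleftrightarrow> (\<forall>i\<in>non_reps ends T. P \<bullet> eq_normal ends T Q i = eq_offset ends T p Q i)"
    for P
  proof -
    define f where "f i = (dist P (Q $ i))\<^sup>2 - p i" for i
    have "P \<in> hyp_inter ends g Q T \<longleftrightarrow> (\<forall>e\<in>T. f (fst (ends e)) = f (snd (ends e)))"
      using assms unfolding mem_hyp_inter_iff_potential potential_def f_def by auto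
    also have "\<dots> \<longleftrightarrow> (\<forall>i. f i = f (comp_rep ends T i))"
      by (rule edgewise_eq_iff_comp_rep)
    also have "\<dots> \<longleftrightarrow> (\<forall>i\<in>non_reps ends T. P \<bullet> eq_normal ends T Q i = eq_offset ends T p Q i)"
    proof -
      have "f i = f (comp_rep ends T i) \<longleftrightarrow> P \<bullet> eq_normal ends T Q i = eq_offset ends T p Q i" for i
        unfolding f_def eq_normal_def eq_offset_def by (rule dist_sq_diff_eq_iff)
      moreover have "f i = f (comp_rep ends T i)" if "i \<notin> non_reps ends T" for i
        using that unfolding non_reps_def by simp
      ultimately show ?thesis
        by metis
    qed
    finally show ?thesis .
  qed
  then show ?thesis
    by blast
qed

definition nonrep_slot :: "('e \<Rightarrow> 'v \<times> 'v) \<Rightarrow> 'e set \<Rightarrow> 'v \<Rightarrow> 'd::finite" where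
  "nonrep_slot ends T = (SOME f. inj_on f (non_reps ends T))"

definition nonrep_choice :: "('e \<Rightarrow> 'v \<times> 'v) \<Rightarrow> 'e set \<Rightarrow> 'd::finite option \<Rightarrow> 'v" where
  "nonrep_choice ends T = (SOME f. inj f \<and> range f \<subseteq> non_reps ends T)"

lemma inj_on_nonrep_slot:
  assumes "card (non_reps ends T) \<le> CARD('d)"
  shows "inj_on (nonrep_slot ends T :: 'v::finite \<Rightarrow> 'd::finite) (non_reps ends T)"
proof -
  have "\<exists>f :: 'v \<Rightarrow> 'd. f ` non_reps ends T \<subseteq> UNIV \<and> inj_on f (non_reps ends T)"
    using card_le_inj[of "non_reps ends T" "UNIV :: 'd set"] assms by simp
  then have "\<exists>f :: 'v \<Rightarrow> 'd. inj_on f (non_reps ends T)"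
    by blast
  then show ?thesis
    unfolding nonrep_slot_def by (rule someI_ex)
qed

lemma inj_nonrep_choice:
  assumes "CARD('d option) \<le> card (non_reps ends T)"
  shows "inj (nonrep_choice ends T :: 'd::finite option \<Rightarrow> 'v::finite)"
    and "range (nonrep_choice ends T :: 'd option \<Rightarrow> 'v) \<subseteq> non_reps ends T"
proof -
  have "\<exists>f :: 'd option \<Rightarrow> 'v. f ` UNIV \<subseteq> non_reps ends T \<and> inj_on f UNIV"
    using card_le_inj[of "UNIV :: 'd option set" "non_reps ends T"] assms by simp
  then have "\<exists>f :: 'd option \<Rightarrow> 'v. inj f \<and> range f \<subseteq> non_reps ends T"
    by blast
  then have "inj (nonrep_choice ends T :: 'd option \<Rightarrow> 'v) \<and> range (nonrep_choice ends T :: 'd option \<Rightarrow> 'v) \<subseteq> non_reps ends T"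
    unfolding nonrep_choice_def by (rule someI_ex)
  then show "inj (nonrep_choice ends T :: 'd option \<Rightarrow> 'v)"
    and "range (nonrep_choice ends T :: 'd option \<Rightarrow> 'v) \<subseteq> non_reps ends T"
    by blast+
qed

text \<open>The two minors whose nonvanishing makes the equations of \<open>T\<close> as independent as possible:
  \<open>normal_minor\<close> for at most \<open>CARD('d)\<close> equations, \<open>augmented_minor\<close> for more.\<close>

definition normal_minor :: "('e \<Rightarrow> 'v::finite \<times> 'v) \<Rightarrow> 'e set \<Rightarrow> (real^'d::finite)^'v \<Rightarrow> real" where
  "normal_minor ends T Q = det (\<chi> k j.
     if k \<in> nonrep_slot ends T ` non_reps ends T
     then eq_normal ends T Q (inv_into (non_reps ends T) (nonrep_slot ends T) k) $ j
     else (if k = j then 1 else 0) :: real^'d^'d)"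

definition augmented_minor :: "('e \<Rightarrow> 'v::finite \<times> 'v) \<Rightarrow> 'e set \<Rightarrow> ('v \<Rightarrow> real) \<Rightarrow> (real^'d::finite)^'v \<Rightarrow> real"
  where "augmented_minor ends T p Q = det (\<chi> k l.
     case l of Some j \<Rightarrow> eq_normal ends T Q ((nonrep_choice ends T :: 'd option \<Rightarrow> 'v) k) $ j
             | None \<Rightarrow> eq_offset ends T p Q (nonrep_choice ends T k) :: real^'d option^'d option)"

lemma hyp_inter_aff_dim_if_normal_minor:
  fixes Q :: "(real^'d::finite)^'v::finite"
  assumes "potential ends g T p" "card (non_reps ends T) \<le> CARD('d)" "normal_minor ends T Q \<noteq> 0"
  shows "hyp_inter ends g Q T \<noteq> {} \<and> aff_dim (hyp_inter ends g Q T) = int (CARD('d) - card (non_reps ends T))"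
  unfolding hyp_inter_eq_linear_system[OF assms(1)]
  by (rule linear_system_aff_dim[OF inj_on_nonrep_slot[OF assms(2)]])
    (use assms(3) in \<open>simp add: normal_minor_def\<close>)

lemma hyp_inter_empty_if_augmented_minor:
  fixes Q :: "(real^'d::finite)^'v::finite"
  assumes "potential ends g T p" "CARD('d option) \<le> card (non_reps ends T)" "augmented_minor ends T p Q \<noteq> 0"
  shows "hyp_inter ends g Q T = {}"
  unfolding hyp_inter_eq_linear_system[OF assms(1)]
  by (rule linear_system_empty[OF inj_nonrep_choice(2)[OF assms(2)]])
    (use assms(3) in \<open>simp add: augmented_minor_def\<close>)

section \<open>Generic position\<close>

lemma real_polynomial_function_component:
  "real_polynomial_function (\<lambda>Q::(real^'d)^'v. Q $ a $ j)"
  unfolding real_polynomial_function_eq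
  by (intro polynomial_function_bounded_linear bounded_linear_compose[OF bounded_linear_vec_nth bounded_linear_vec_nth])

text \<open>\<open>real_polynomial_function.intros(2-4)\<close> are the constant, sum and product rules, whose short
  names the library hides.\<close>

lemma real_polynomial_function_inner_component:
  "real_polynomial_function (\<lambda>Q::(real^'d)^'v. Q $ a \<bullet> Q $ b)"
  unfolding inner_vec_def inner_real_def
  by (intro real_polynomial_function_sum real_polynomial_function.intros(4) real_polynomial_function_component) simp

lemma real_polynomial_function_eq_normal:
  "real_polynomial_function (\<lambda>Q::(real^'d)^'v. eq_normal ends T Q i $ j)"
  unfolding eq_normal_def by (simp add: real_polynomial_function_diff real_polynomial_function_component)

lemma real_polynomial_function_eq_offset:
  "real_polynomial_function (\<lambda>Q::(real^'d)^'v. eq_offset ends T p Q i)"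
  unfolding eq_offset_def
  by (intro real_polynomial_function_divide real_polynomial_function_diff real_polynomial_function.intros(3)
      real_polynomial_function.intros(2) real_polynomial_function_inner_component)

lemma real_polynomial_function_If:
  "real_polynomial_function f \<Longrightarrow> real_polynomial_function g \<Longrightarrow> real_polynomial_function (\<lambda>x. if c then f x else g x)"
  by (cases c) simp_all

lemma real_polynomial_function_normal_minor:
  "real_polynomial_function (normal_minor ends T :: (real^'d::finite)^'v::finite \<Rightarrow> real)"
  unfolding normal_minor_def
  by (rule real_polynomial_function_det) (simp only: vec_lambda_beta,
    intro real_polynomial_function_If real_polynomial_function_eq_normal real_polynomial_function.intros(2))

lemma real_polynomial_function_augmented_minor:
  "real_polynomial_function (augmented_minor ends T p :: (real^'d::finite)^'v::finite \<Rightarrow> real)"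
  unfolding augmented_minor_def
proof (rule real_polynomial_function_det)
  fix k l :: "'d option"
  show "real_polynomial_function (\<lambda>Q. (\<chi> k l. case l of
      Some j \<Rightarrow> eq_normal ends T Q ((nonrep_choice ends T :: 'd option \<Rightarrow> 'v) k) $ j
    | None \<Rightarrow> eq_offset ends T p Q (nonrep_choice ends T k) :: real^'d option^'d option) $ k $ l)"
    by (cases l) (simp_all add: real_polynomial_function_eq_normal real_polynomial_function_eq_offset)
qed

text \<open>Witness: \<open>Q\<close> is \<open>-e\<^sub>k\<close> at the non-representative with slot \<open>k\<close> and \<open>0\<close> elsewhere,
  which turns the matrix of \<open>normal_minor\<close> into the identity.\<close>

lemma normal_minor_nonzero_somewhere:
  assumes "card (non_reps ends T) \<le> CARD('d::finite)"
  shows "\<exists>Q::(real^'d)^'v::finite. normal_minor ends T Q \<noteq> 0"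
proof -
  let ?N = "non_reps ends T"
  let ?\<sigma> = "nonrep_slot ends T :: 'v \<Rightarrow> 'd"
  define Q :: "(real^'d)^'v" where "Q = (\<chi> v. if v \<in> ?N then - axis (?\<sigma> v) 1 else 0)"
  have "eq_normal ends T Q (inv_into ?N ?\<sigma> k) = axis k 1" if "k \<in> ?\<sigma> ` ?N" for k
  proof -
    have "inv_into ?N ?\<sigma> k \<in> ?N" "?\<sigma> (inv_into ?N ?\<sigma> k) = k"
      using that by (auto simp: inv_into_into f_inv_into_f)
    then show ?thesis
      unfolding eq_normal_def Q_def using comp_rep_not_in_non_reps by simp
  qed
  then have "(\<chi> k j. if k \<in> ?\<sigma> ` ?N then eq_normal ends T Q (inv_into ?N ?\<sigma> k) $ j
      else (if k = j then 1 else 0) :: real^'d^'d) = mat 1"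
    by (simp add: vec_eq_iff mat_def axis_def)
  then have "normal_minor ends T Q = 1"
    unfolding normal_minor_def by simp
  then show ?thesis
    by (intro exI[of _ Q]) simp
qed

text \<open>Witness: \<open>Q\<close> is \<open>-e\<^sub>j\<close> at \<open>\<tau> (Some j)\<close>, \<open>-s e\<^sub>j\<^sub>0\<close> at \<open>\<tau> None\<close> and \<open>0\<close> elsewhere.
  A kernel vector \<open>y\<close> of the augmented matrix then satisfies \<open>y\<^sub>N\<^sub>o\<^sub>n\<^sub>e * F s = 0\<close> for a quadratic
  \<open>F\<close> that cannot vanish at all of \<open>0, 1, -1\<close>; choosing \<open>s\<close> among these forces \<open>y = 0\<close>.\<close>

lemma augmented_minor_nonzero_somewhere:
  assumes c: "CARD('d::finite option) \<le> card (non_reps ends T)"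
  shows "\<exists>Q::(real^'d)^'v::finite. augmented_minor ends T p Q \<noteq> 0"
proof -
  let ?\<tau> = "nonrep_choice ends T :: 'd option \<Rightarrow> 'v"
  have inj: "inj ?\<tau>" and rng: "range ?\<tau> \<subseteq> non_reps ends T"
    using inj_nonrep_choice[OF c] by auto
  define j0 :: 'd where "j0 = undefined"
  define cc where "cc k = p (?\<tau> k) - p (comp_rep ends T (?\<tau> k))" for k
  define F where "F s = (cc None - s\<^sup>2) / 2 - s * ((cc (Some j0) - 1) / 2)" for s :: real
  obtain s where s: "F s \<noteq> 0"
  proof -
    have "F 0 \<noteq> 0 \<or> F 1 \<noteq> 0 \<or> F (-1) \<noteq> 0"
      unfolding F_def by (auto simp: field_simps)
    then show ?thesis
      using that by blast
  qed
  define qf :: "'d option \<Rightarrow> real^'d" where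
    "qf k = (case k of Some j \<Rightarrow> - axis j 1 | None \<Rightarrow> - (s *\<^sub>R axis j0 1))" for k
  define Q :: "(real^'d)^'v" where "Q = (\<chi> v. if v \<in> range ?\<tau> then qf (inv ?\<tau> v) else 0)"
  have Q_rep: "Q $ comp_rep ends T (?\<tau> k) = 0" for k
  proof -
    have "comp_rep ends T (?\<tau> k) \<notin> range ?\<tau>"
      using rng comp_rep_not_in_non_reps[of ends T "?\<tau> k"] by auto
    then show ?thesis
      unfolding Q_def by simp
  qed
  have Q_choice: "Q $ ?\<tau> k = qf k" for k
    unfolding Q_def using inv_f_f[OF inj] by simp
  have normal: "eq_normal ends T Q (?\<tau> k) = - qf k" and offset: "eq_offset ends T p Q (?\<tau> k) = (cc k - qf k \<bullet> qf k) / 2"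
    for k
    unfolding eq_normal_def eq_offset_def Q_rep Q_choice cc_def by simp_all
  define M :: "real^'d option^'d option" where
    "M = (\<chi> k l. case l of Some j \<Rightarrow> eq_normal ends T Q (?\<tau> k) $ j | None \<Rightarrow> eq_offset ends T p Q (?\<tau> k))"
  have row: "(M *v y) $ k = (cc k - qf k \<bullet> qf k) / 2 * y $ None + (- qf k) \<bullet> (\<chi> j. y $ Some j)" for y k
    unfolding matrix_vector_mult_option_component M_def normal offset inner_vec_def by simp
  have "y = 0" if "M *v y = 0" for y
  proof -
    have r: "(cc k - qf k \<bullet> qf k) / 2 * y $ None + (- qf k) \<bullet> (\<chi> j. y $ Some j) = 0" for k
      using row[of y k] that by simp
    have some: "(cc (Some j) - 1) / 2 * y $ None + y $ Some j = 0" for j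
      using r[of "Some j"] unfolding qf_def by (simp add: inner_axis')
    have none: "(cc None - s\<^sup>2) / 2 * y $ None + s * y $ Some j0 = 0"
      using r[of None] unfolding qf_def by (simp add: inner_axis' power2_eq_square)
    have "y $ None * F s = ((cc None - s\<^sup>2) / 2 * y $ None + s * y $ Some j0)
        - s * ((cc (Some j0) - 1) / 2 * y $ None + y $ Some j0)"
      unfolding F_def by (simp add: algebra_simps)
    then have "y $ None = 0"
      using some[of j0] none s by simp
    then have "y $ l = 0" for l
      using some by (cases l) simp_all
    then show "y = 0"
      by (simp add: vec_eq_iff)
  qed
  then have "det M \<noteq> 0"
    unfolding det_nonzero_iff_trivial_kernel by blast
  then show ?thesis
    unfolding augmented_minor_def M_def by blast
qed

definition system_minor :: "('e \<Rightarrow> 'v::finite \<times> 'v) \<Rightarrow> ('e \<Rightarrow> real) \<Rightarrow> 'e set \<Rightarrow> (real^'d::finite)^'v \<Rightarrow> real"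
  where "system_minor ends g T Q =
    (if card (non_reps ends T) \<le> CARD('d) then normal_minor ends T Q
     else augmented_minor ends T (SOME p. potential ends g T p) Q)"

definition generic :: "'e set \<Rightarrow> ('e \<Rightarrow> 'v::finite \<times> 'v) \<Rightarrow> ('e \<Rightarrow> real) \<Rightarrow> (real^'d::finite)^'v \<Rightarrow> bool"
  where "generic E ends g Q \<longleftrightarrow> (\<forall>T\<subseteq>E. (\<exists>p. potential ends g T p) \<longrightarrow> system_minor ends g T Q \<noteq> 0)"

lemma system_minor_nonzero_open_dense:
  "open {Q :: (real^'d::finite)^'v::finite. system_minor ends g T Q \<noteq> 0}
   \<and> closure {Q :: (real^'d)^'v. system_minor ends g T Q \<noteq> 0} = UNIV"
proof -
  have poly: "real_polynomial_function (system_minor ends g T :: (real^'d)^'v \<Rightarrow> real)"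
    unfolding system_minor_def[abs_def]
    by (intro real_polynomial_function_If real_polynomial_function_normal_minor
        real_polynomial_function_augmented_minor)
  obtain Q :: "(real^'d)^'v" where "system_minor ends g T Q \<noteq> 0"
  proof (cases "card (non_reps ends T) \<le> CARD('d)")
    case True
    then show ?thesis
      using normal_minor_nonzero_somewhere that unfolding system_minor_def by metis
  next
    case False
    then have "CARD('d option) \<le> card (non_reps ends T)"
      by simp
    then show ?thesis
      using augmented_minor_nonzero_somewhere False that unfolding system_minor_def by metis
  qed
  then show ?thesis
    by (rule real_polynomial_function_nonzero_open_dense[OF poly])
qed

lemma generic_open_dense:
  assumes "finite E"
  shows "open {Q :: (real^'d::finite)^'v::finite. generic E ends g Q}
    \<and> closure {Q :: (real^'d)^'v. generic E ends g Q} = UNIV"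
proof -
  let ?Ts = "{T. T \<subseteq> E \<and> (\<exists>p. potential ends g T p)}"
  have eq: "{Q :: (real^'d)^'v. generic E ends g Q} = (\<Inter>T\<in>?Ts. {Q. system_minor ends g T Q \<noteq> 0})"
    unfolding generic_def by auto
  have "finite ?Ts"
    using assms by (auto intro: finite_subset[of _ "Pow E"])
  then have "open (\<Inter>T\<in>?Ts. {Q :: (real^'d)^'v. system_minor ends g T Q \<noteq> 0})
      \<and> closure (\<Inter>T\<in>?Ts. {Q :: (real^'d)^'v. system_minor ends g T Q \<noteq> 0}) = UNIV"
    using system_minor_nonzero_open_dense by (intro open_dense_Inter) auto
  then show ?thesis
    unfolding eq .
qed

lemma generic_hyp_inter_aff_dim:
  fixes Q :: "(real^'d::finite)^'v::finite"
  assumes "generic E ends g Q" "T \<subseteq> E" "potential ends g T p" "latb_rank ends T \<le> CARD('d)"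
  shows "hyp_inter ends g Q T \<noteq> {} \<and> aff_dim (hyp_inter ends g Q T) = int (CARD('d) - latb_rank ends T)"
proof -
  have "normal_minor ends T Q \<noteq> 0"
    using assms unfolding generic_def system_minor_def card_non_reps by auto
  then show ?thesis
    using hyp_inter_aff_dim_if_normal_minor[OF assms(3)] assms(4) unfolding card_non_reps by blast
qed

lemma generic_hyp_inter_empty:
  fixes Q :: "(real^'d::finite)^'v::finite"
  assumes "generic E ends g Q" "T \<subseteq> E" "potential ends g T p" "CARD('d) < latb_rank ends T"
  shows "hyp_inter ends g Q T = {}"
proof -
  let ?p = "SOME p. potential ends g T p"
  have "potential ends g T ?p"
    using someI[of "potential ends g T" p] assms(3) by blast
  moreover have "augmented_minor ends T ?p Q \<noteq> 0"
    using assms unfolding generic_def system_minor_def card_non_reps by auto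
  moreover have "CARD('d option) \<le> card (non_reps ends T)"
    using assms(4) unfolding card_non_reps by simp
  ultimately show ?thesis
    using hyp_inter_empty_if_augmented_minor by blast
qed

lemma generic_hyp_inter_nonempty:
  fixes Q :: "(real^'d::finite)^'v::finite"
  assumes "generic E ends g Q" "T \<subseteq> E" "hyp_inter ends g Q T \<noteq> {}"
  shows "(\<exists>p. potential ends g T p) \<and> latb_rank ends T \<le> CARD('d)"
proof -
  obtain P where "P \<in> hyp_inter ends g Q T"
    using assms(3) by blast
  then have "potential ends g T (\<lambda>i. (dist P (Q $ i))\<^sup>2)"
    by (simp add: mem_hyp_inter_iff_potential)
  then show ?thesis
    using generic_hyp_inter_empty[OF assms(1,2)] assms(3) by (meson not_le)
qed

section \<open>Balanced flats and the intersection poset\<close>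

definition flat_closure :: "'e set \<Rightarrow> ('e \<Rightarrow> 'v \<times> 'v) \<Rightarrow> ('e \<Rightarrow> real) \<Rightarrow> 'e set \<Rightarrow> ('v \<Rightarrow> real) \<Rightarrow> 'e set"
  where "flat_closure E ends g T p =
    {e\<in>E. ends e \<in> (adj ends T)\<^sup>* \<and> g e = p (fst (ends e)) - p (snd (ends e))}"

lemma subset_flat_closure:
  assumes "T \<subseteq> E" "potential ends g T p"
  shows "T \<subseteq> flat_closure E ends g T p"
proof
  fix e assume "e \<in> T"
  then show "e \<in> flat_closure E ends g T p"
    using assms ends_in_adj_rtrancl[OF \<open>e \<in> T\<close>] unfolding flat_closure_def potential_def by auto
qed

lemma potential_flat_closure: "potential ends g (flat_closure E ends g T p) p"
  unfolding flat_closure_def potential_def by blast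

lemma adj_rtrancl_flat_closure:
  assumes "T \<subseteq> E" "potential ends g T p"
  shows "(adj ends (flat_closure E ends g T p))\<^sup>* = (adj ends T)\<^sup>*"
proof
  show "(adj ends T)\<^sup>* \<subseteq> (adj ends (flat_closure E ends g T p))\<^sup>*"
    by (rule adj_rtrancl_mono[OF subset_flat_closure[OF assms]])
  have "adj ends (flat_closure E ends g T p) \<subseteq> (adj ends T)\<^sup>*"
  proof
    fix ab assume "ab \<in> adj ends (flat_closure E ends g T p)"
    then obtain a b e where ab: "ab = (a, b)" "e \<in> flat_closure E ends g T p" "joins ends e a b"
      unfolding adj_def by blast
    then have "ends e \<in> (adj ends T)\<^sup>*"
      unfolding flat_closure_def by blast
    then show "ab \<in> (adj ends T)\<^sup>*"
      using ab(1,3) adj_rtrancl_sym unfolding joins_def by auto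
  qed
  then show "(adj ends (flat_closure E ends g T p))\<^sup>* \<subseteq> (adj ends T)\<^sup>*"
    by (rule rtrancl_subset_rtrancl)
qed

lemma hyp_inter_flat_closure:
  assumes "T \<subseteq> E" "potential ends g T p"
  shows "hyp_inter ends g Q (flat_closure E ends g T p) = hyp_inter ends g Q T"
proof
  show "hyp_inter ends g Q (flat_closure E ends g T p) \<subseteq> hyp_inter ends g Q T"
    by (rule hyp_inter_antimono[OF subset_flat_closure[OF assms]])
  show "hyp_inter ends g Q T \<subseteq> hyp_inter ends g Q (flat_closure E ends g T p)"
  proof
    fix P assume "P \<in> hyp_inter ends g Q T"
    then have pP: "potential ends g T (\<lambda>i. (dist P (Q $ i))\<^sup>2)"
      by (simp add: mem_hyp_inter_iff_potential)
    have "potential ends g (flat_closure E ends g T p) (\<lambda>i. (dist P (Q $ i))\<^sup>2)"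
      unfolding potential_def
    proof
      fix e assume e: "e \<in> flat_closure E ends g T p"
      then have "ends e \<in> (adj ends T)\<^sup>*"
        unfolding flat_closure_def by blast
      then have "(dist P (Q $ fst (ends e)))\<^sup>2 - (dist P (Q $ snd (ends e)))\<^sup>2
          = p (fst (ends e)) - p (snd (ends e))"
        using potential_diff_connected[OF pP assms(2)] by (metis prod.collapse)
      then show "g e = (dist P (Q $ fst (ends e)))\<^sup>2 - (dist P (Q $ snd (ends e)))\<^sup>2"
        using e unfolding flat_closure_def by simp
    qed
    then show "P \<in> hyp_inter ends g Q (flat_closure E ends g T p)"
      by (simp add: mem_hyp_inter_iff_potential)
  qed
qed

context
  fixes E :: "'e set" and ends :: "'e \<Rightarrow> 'v::finite \<times> 'v" and g :: "'e \<Rightarrow> real"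
  assumes finite_E: "finite E" and loopless: "\<forall>e\<in>E. fst (ends e) \<noteq> snd (ends e)"
begin

lemma subset_imp_potential:
  assumes "S \<subseteq> E" "balanced ends g S"
  shows "\<exists>p. potential ends g S p"
  by (rule balanced_imp_potential[OF finite_subset[OF assms(1) finite_E] _ assms(2)])
    (use loopless assms(1) in auto)

lemma latb_imp_potential: "S \<in> latb E ends g \<Longrightarrow> S \<subseteq> E \<and> (\<exists>p. potential ends g S p)"
  unfolding latb_def balanced_flat_def using subset_imp_potential by blast

lemma flat_closure_in_latb:
  assumes "T \<subseteq> E" "potential ends g T p"
  shows "flat_closure E ends g T p \<in> latb E ends g"
  unfolding latb_def balanced_flat_def
proof (intro CollectI conjI ballI impI notI)
  let ?C = "flat_closure E ends g T p"
  show "?C \<subseteq> E"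
    unfolding flat_closure_def by blast
  show "balanced ends g ?C"
    by (rule potential_imp_balanced[OF potential_flat_closure])
  fix e assume e: "e \<in> E - ?C" and conn: "ends e \<in> (adj ends ?C)\<^sup>*"
    and bal: "balanced ends g (insert e ?C)"
  have "insert e ?C \<subseteq> E"
    using e \<open>?C \<subseteq> E\<close> by blast
  then obtain q where q: "potential ends g (insert e ?C) q"
    using subset_imp_potential[OF _ bal] by blast
  have "g e = q (fst (ends e)) - q (snd (ends e))"
    using q unfolding potential_def by simp
  also have "\<dots> = p (fst (ends e)) - p (snd (ends e))"
    using potential_diff_connected[OF potential_mono[OF q subset_insertI] potential_flat_closure,
        of "fst (ends e)" "snd (ends e)"] conn
    by simp
  finally have "e \<in> ?C"
    using e conn adj_rtrancl_flat_closure[OF assms] unfolding flat_closure_def by simp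
  then show False
    using e by blast
qed

lemma hyp_inter_latb_mem:
  fixes Q :: "(real^'d::finite)^'v"
  assumes "generic E ends g Q" "S \<in> latb E ends g" "latb_rank ends S \<le> CARD('d)"
  shows "hyp_inter ends g Q S \<in> arr_lattice E ends g Q" and "codim (hyp_inter ends g Q S) = latb_rank ends S"
proof -
  obtain p where "S \<subseteq> E" "potential ends g S p"
    using latb_imp_potential[OF assms(2)] by blast
  then have "hyp_inter ends g Q S \<noteq> {}"
    and dim: "aff_dim (hyp_inter ends g Q S) = int (CARD('d) - latb_rank ends S)"
    using generic_hyp_inter_aff_dim[OF assms(1)] assms(3) by blast+
  then show "hyp_inter ends g Q S \<in> arr_lattice E ends g Q"
    using \<open>S \<subseteq> E\<close> unfolding arr_lattice_def hyp_inter_def by blast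
  show "codim (hyp_inter ends g Q S) = latb_rank ends S"
    unfolding codim_def dim using assms(3) by simp
qed

text \<open>Order reflection: if \<open>X\<^sub>S\<^sub>' \<subseteq> X\<^sub>S\<close> then \<open>S \<union> S'\<close> has the same intersection, hence by
  genericity the same rank and so the same components as \<open>S'\<close>; flatness of \<open>S'\<close> absorbs \<open>S\<close>.\<close>

lemma hyp_inter_latb_subset_iff:
  fixes Q :: "(real^'d::finite)^'v"
  assumes gen: "generic E ends g Q"
    and S: "S \<in> latb E ends g" "latb_rank ends S \<le> CARD('d)"
    and S': "S' \<in> latb E ends g" "latb_rank ends S' \<le> CARD('d)"
  shows "hyp_inter ends g Q S' \<subseteq> hyp_inter ends g Q S \<longleftrightarrow> S \<subseteq> S'"
proof
  assume sub: "hyp_inter ends g Q S' \<subseteq> hyp_inter ends g Q S"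
  let ?T = "S \<union> S'"
  obtain p' where "S' \<subseteq> E" "potential ends g S' p'"
    using latb_imp_potential[OF S'(1)] by blast
  then have X': "hyp_inter ends g Q S' \<noteq> {}"
    "aff_dim (hyp_inter ends g Q S') = int (CARD('d) - latb_rank ends S')"
    using generic_hyp_inter_aff_dim[OF gen] S'(2) by blast+
  have XT: "hyp_inter ends g Q ?T = hyp_inter ends g Q S'"
    using sub unfolding hyp_inter_Un by blast
  have TE: "?T \<subseteq> E"
    using latb_imp_potential S S' by blast
  obtain pT where pT: "potential ends g ?T pT" and rkT: "latb_rank ends ?T \<le> CARD('d)"
    using generic_hyp_inter_nonempty[OF gen TE] XT X'(1) by auto
  then have "int (CARD('d) - latb_rank ends ?T) = int (CARD('d) - latb_rank ends S')"
    using generic_hyp_inter_aff_dim[OF gen TE pT] XT X'(2) by simp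
  then have "ncomp ends ?T = ncomp ends S'"
    using rkT S'(2) ncomp_le_card[of ends ?T] ncomp_le_card[of ends S'] unfolding latb_rank_def by simp
  then have comps: "(adj ends ?T)\<^sup>* = (adj ends S')\<^sup>*"
    using ncomp_antimono(2)[of S' ?T ends] by simp
  show "S \<subseteq> S'"
  proof
    fix e assume eS: "e \<in> S"
    show "e \<in> S'"
    proof (rule ccontr)
      assume "e \<notin> S'"
      moreover have "ends e \<in> (adj ends S')\<^sup>*"
        using ends_in_adj_rtrancl[of e ?T ends] eS comps by simp
      moreover have "balanced ends g (insert e S')"
        using potential_imp_balanced[OF potential_mono[OF pT]] eS by blast
      ultimately show False
        using S'(1) eS TE unfolding latb_def balanced_flat_def by blast
    qed
  qed
qed (rule hyp_inter_antimono)

lemma arr_lattice_eq_hyp_inter_latb: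
  fixes Q :: "(real^'d::finite)^'v"
  assumes gen: "generic E ends g Q" and X: "X \<in> arr_lattice E ends g Q"
  shows "\<exists>S\<in>latb E ends g. latb_rank ends S \<le> CARD('d) \<and> hyp_inter ends g Q S = X"
proof -
  obtain T where T: "T \<subseteq> E" "X = hyp_inter ends g Q T" "X \<noteq> {}"
    using X unfolding arr_lattice_def hyp_inter_def by blast
  then obtain p where p: "potential ends g T p" and rk: "latb_rank ends T \<le> CARD('d)"
    using generic_hyp_inter_nonempty[OF gen] by auto
  let ?C = "flat_closure E ends g T p"
  show ?thesis
  proof (intro bexI conjI)
    have "latb_rank ends ?C = latb_rank ends T"
      unfolding latb_rank_def ncomp_def adj_rtrancl_flat_closure[OF T(1) p] ..
    then show "latb_rank ends ?C \<le> CARD('d)"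
      using rk by simp
    show "hyp_inter ends g Q ?C = X"
      using hyp_inter_flat_closure[OF T(1) p] T(2) by simp
    show "?C \<in> latb E ends g"
      by (rule flat_closure_in_latb[OF T(1) p])
  qed
qed

lemma bij_betw_hyp_inter_latb:
  fixes Q :: "(real^'d::finite)^'v"
  assumes gen: "generic E ends g Q"
  shows "bij_betw (hyp_inter ends g Q) {S\<in>latb E ends g. latb_rank ends S \<le> CARD('d)} (arr_lattice E ends g Q)"
  unfolding bij_betw_def
proof
  show "inj_on (hyp_inter ends g Q) {S\<in>latb E ends g. latb_rank ends S \<le> CARD('d)}"
  proof (rule inj_onI)
    fix a b assume "a \<in> {S\<in>latb E ends g. latb_rank ends S \<le> CARD('d)}"
      "b \<in> {S\<in>latb E ends g. latb_rank ends S \<le> CARD('d)}" "hyp_inter ends g Q a = hyp_inter ends g Q b"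
    then show "a = b"
      using hyp_inter_latb_subset_iff[OF gen, of a b] hyp_inter_latb_subset_iff[OF gen, of b a] by auto
  qed
  show "hyp_inter ends g Q ` {S\<in>latb E ends g. latb_rank ends S \<le> CARD('d)} = arr_lattice E ends g Q"
    using hyp_inter_latb_mem(1)[OF gen] arr_lattice_eq_hyp_inter_latb[OF gen] by blast
qed

lemma whitney_latb_eq_arr_lattice:
  fixes Q :: "(real^'d::finite)^'v"
  assumes gen: "generic E ends g Q" and "i \<le> CARD('d)" "j \<le> CARD('d)"
  shows "whitney (latb E ends g) (\<subseteq>) (latb_rank ends) i j = whitney (arr_lattice E ends g Q) revincl codim i j"
proof (rule whitney_transfer[OF _ poset_on_subset _ poset_on_revincl _ bij_betw_hyp_inter_latb[OF gen]])
  show "finite (latb E ends g)"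
    unfolding latb_def balanced_flat_def using finite_E by (auto intro: finite_subset[of _ "Pow E"])
  show "finite (arr_lattice E ends g Q)"
    using finite_E unfolding arr_lattice_def by (auto intro: finite_subset[of _ "(\<lambda>T. \<Inter> (hyp ends g Q ` T)) ` Pow E"])
  show "latb_rank ends x \<le> latb_rank ends y" if "x \<subseteq> y" for x y
    using ncomp_antimono(1)[OF that, of ends] unfolding latb_rank_def by simp
  show "revincl (hyp_inter ends g Q a) (hyp_inter ends g Q b) \<longleftrightarrow> a \<subseteq> b"
    if "a \<in> latb E ends g" "b \<in> latb E ends g" "latb_rank ends a \<le> CARD('d)" "latb_rank ends b \<le> CARD('d)" for a b
    unfolding revincl_def using hyp_inter_latb_subset_iff[OF gen] that by blast
  show "codim (hyp_inter ends g Q a) = latb_rank ends a"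
    if "a \<in> latb E ends g" "latb_rank ends a \<le> CARD('d)" for a
    using hyp_inter_latb_mem(2)[OF gen that] .
qed (use assms in auto)

end

theorem theorem10p3:
  fixes E :: "'e set" and ends :: "'e \<Rightarrow> 'v::finite \<times> 'v" and g :: "'e \<Rightarrow> real"
  assumes "finite E"
    and "\<forall>e \<in> E. fst (ends e) \<noteq> snd (ends e)"
    and "CARD('d::finite) \<le> CARD('v)"
  shows "\<exists>U :: ((real^'d)^'v) set. open U \<and> closure U = UNIV \<and>
           (\<forall>Q \<in> U.
              arr_char_poly E ends g Q = poly_part_div (CARD('v) - CARD('d)) (gg_char_poly E ends g) \<and>
              arr_whitney_poly E ends g Q = poly_part_div (CARD('v) - CARD('d)) (gg_whitney_poly E ends g))"
proof (intro exI conjI ballI)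
  let ?U = "{Q :: (real^'d)^'v. generic E ends g Q}"
  show "open ?U" "closure ?U = UNIV"
    using generic_open_dense[OF assms(1)] by blast+
  fix Q assume "Q \<in> ?U"
  then have W: "whitney (arr_lattice E ends g Q) revincl codim i j = whitney (latb E ends g) (\<subseteq>) (latb_rank ends) i j"
    if "i \<le> CARD('d)" "j \<le> CARD('d)" for i j
    using whitney_latb_eq_arr_lattice[OF assms(1,2) _ that, of g Q] by simp
  show "arr_char_poly E ends g Q = poly_part_div (CARD('v) - CARD('d)) (gg_char_poly E ends g)"
    unfolding arr_char_poly_def gg_char_poly_def poly_part_div_def
    by (rule char_poly_of_truncate[OF assms(3)]) (simp add: W)
  show "arr_whitney_poly E ends g Q = poly_part_div (CARD('v) - CARD('d)) (gg_whitney_poly E ends g)"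
    unfolding arr_whitney_poly_def gg_whitney_poly_def poly_part_div_def
    by (rule whitney_poly_of_truncate[OF assms(3)]) (simp add: W)
qed

end
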